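(* Let $\mathcal{F}$ be a saturated fusion system over a finite $p$-group $S$, and let $P\le Q\le S$ be such that $P\trianglelefteq\mathcal{F}$ and $Q/P\trianglelefteq\mathcal{F}/P$. If $Q$ is abelian, or if $P\le Z(\mathcal{F})$, then $Q\trianglelefteq\mathcal{F}$.
   Context: A fusion system $\mathcal{F}$ over a finite $p$-group $S$ is a category whose objects are the subgroups of $S$, with $\mathrm{Hom}_S(P,Q)\subseteq\mathrm{Hom}_{\mathcal{F}}(P,Q)\subseteq\mathrm{Inj}(P,Q)$, every morphism an isomorphism in $\mathcal{F}$ followed by an inclusion; saturation is given by Puig's Sylow and extension axioms. A subgroup $Q\le S$ is normal in $\mathcal{F}$ ($Q\trianglelefteq\mathcal{F}$) if every morphism of $\mathcal{F}$ extends to a morphism of $\mathcal{F}$ sending $Q$ to itself; it is central if every morphism extends to one sending $Q$ to itself via the identity, and $Z(\mathcal{F})$ is the largest central subgroup. For $P\trianglelefteq\mathcal{F}$, $\mathcal{F}/P$ is the fusion system over $S/P$ whose morphisms $R_1/P\to R_2/P$ (for $P\le R_1,R_2\le S$) are the maps induced by morphisms $\varphi\in\mathrm{Hom}_{\mathcal{F}}(R_1,R_2)$. *)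

theory Defs
  imports "HOL-Algebra.Algebra"
begin

text \<open>Fusion systems over a finite group G (the p-group S), in the HOL-Algebra idiom.
A fusion system is given as a function F assigning to subgroups P, Q of G the set
F P Q of morphisms P -> Q. Morphisms are functions extensional on their domain.\<close>

definition conjmap :: "('a, 'b) monoid_scheme \<Rightarrow> 'a \<Rightarrow> 'a \<Rightarrow> 'a" where
  "conjmap G g = (\<lambda>x. g \<otimes>\<^bsub>G\<^esub> x \<otimes>\<^bsub>G\<^esub> inv\<^bsub>G\<^esub> g)"

definition HomS :: "('a, 'b) monoid_scheme \<Rightarrow> 'a set \<Rightarrow> 'a set \<Rightarrow> ('a \<Rightarrow> 'a) set" where
  "HomS G P Q = {restrict (conjmap G g) P | g. g \<in> carrier G \<and> conjmap G g ` P \<subseteq> Q}"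

definition InjHom :: "('a, 'b) monoid_scheme \<Rightarrow> 'a set \<Rightarrow> 'a set \<Rightarrow> ('a \<Rightarrow> 'a) set" where
  "InjHom G P Q = {\<phi>. \<phi> \<in> extensional P \<and> \<phi> \<in> hom (G\<lparr>carrier := P\<rparr>) (G\<lparr>carrier := Q\<rparr>) \<and> inj_on \<phi> P}"

definition fusion_system ::
  "('a, 'b) monoid_scheme \<Rightarrow> ('a set \<Rightarrow> 'a set \<Rightarrow> ('a \<Rightarrow> 'a) set) \<Rightarrow> bool" where
  "fusion_system G F \<longleftrightarrow>
     (\<forall>P Q. \<not> (subgroup P G \<and> subgroup Q G) \<longrightarrow> F P Q = {}) \<and>
     (\<forall>P Q. subgroup P G \<and> subgroup Q G \<longrightarrow> HomS G P Q \<subseteq> F P Q \<and> F P Q \<subseteq> InjHom G P Q) \<and>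
     (\<forall>P Q R \<phi> \<psi>. \<phi> \<in> F P Q \<and> \<psi> \<in> F Q R \<longrightarrow> restrict (\<psi> \<circ> \<phi>) P \<in> F P R) \<and>
     (\<forall>P Q \<phi>. \<phi> \<in> F P Q \<longrightarrow>
        \<phi> \<in> F P (\<phi> ` P) \<and> restrict (inv_into P \<phi>) (\<phi> ` P) \<in> F (\<phi> ` P) P)"

definition normalizerS :: "('a, 'b) monoid_scheme \<Rightarrow> 'a set \<Rightarrow> 'a set" where
  "normalizerS G P = {g \<in> carrier G. conjmap G g ` P = P}"

definition centralizerS :: "('a, 'b) monoid_scheme \<Rightarrow> 'a set \<Rightarrow> 'a set" where
  "centralizerS G P = {g \<in> carrier G. \<forall>x\<in>P. g \<otimes>\<^bsub>G\<^esub> x = x \<otimes>\<^bsub>G\<^esub> g}"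

definition fully_normalized where
  "fully_normalized G F P \<longleftrightarrow>
     (\<forall>\<phi>\<in>F P (carrier G). card (normalizerS G (\<phi> ` P)) \<le> card (normalizerS G P))"

definition fully_centralized where
  "fully_centralized G F P \<longleftrightarrow>
     (\<forall>\<phi>\<in>F P (carrier G). card (centralizerS G (\<phi> ` P)) \<le> card (centralizerS G P))"

definition N_phi where
  "N_phi G P \<phi> = {g \<in> normalizerS G P. \<exists>h\<in>carrier G.
       \<forall>x\<in>P. \<phi> (conjmap G g x) = conjmap G h (\<phi> x)}"

definition saturated_fusion_system where
  "saturated_fusion_system p G F \<longleftrightarrow> fusion_system G F \<and>
     \<comment> \<open>Sylow axiom: fully normalized implies fully centralized and
         Aut_S(P) is a Sylow p-subgroup of Aut_F(P) (Aut_S(P) being a p-group,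
         this means the index is prime to p)\<close>
     (\<forall>P. subgroup P G \<and> fully_normalized G F P \<longrightarrow>
        fully_centralized G F P \<and>
        (\<exists>m. card (F P P) = card (HomS G P P) * m \<and> \<not> p dvd m)) \<and>
     \<comment> \<open>extension axiom\<close>
     (\<forall>P \<phi>. subgroup P G \<and> \<phi> \<in> F P (carrier G) \<and> fully_centralized G F (\<phi> ` P) \<longrightarrow>
        (\<exists>\<psi>\<in>F (N_phi G P \<phi>) (carrier G). \<forall>x\<in>P. \<psi> x = \<phi> x))"

definition fusion_normal where
  "fusion_normal G F Q \<longleftrightarrow> subgroup Q G \<and>
     (\<forall>P R \<phi>. \<phi> \<in> F P R \<longrightarrow>
        (\<exists>A B \<psi>. P \<subseteq> A \<and> Q \<subseteq> A \<and> \<psi> \<in> F A B \<and> (\<forall>x\<in>P. \<psi> x = \<phi> x) \<and> \<psi> ` Q = Q))"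

definition fusion_central where
  "fusion_central G F Q \<longleftrightarrow> subgroup Q G \<and>
     (\<forall>P R \<phi>. \<phi> \<in> F P R \<longrightarrow>
        (\<exists>A B \<psi>. P \<subseteq> A \<and> Q \<subseteq> A \<and> \<psi> \<in> F A B \<and> (\<forall>x\<in>P. \<psi> x = \<phi> x) \<and> (\<forall>x\<in>Q. \<psi> x = x)))"

definition fusion_center where
  "fusion_center G F = \<Union> {Q. fusion_central G F Q}"

text \<open>The quotient F/P, a fusion system over G Mod P: morphisms R1/P -> R2/P induced by
morphisms phi in Hom_F(R1,R2), P <= R1, R2 (with phi(P) = P so that phi induces a map).\<close>
definition fusion_quotient ::
  "('a, 'b) monoid_scheme \<Rightarrow> ('a set \<Rightarrow> 'a set \<Rightarrow> ('a \<Rightarrow> 'a) set) \<Rightarrow> 'a set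
     \<Rightarrow> 'a set set \<Rightarrow> 'a set set \<Rightarrow> ('a set \<Rightarrow> 'a set) set" where
  "fusion_quotient G F P A1 A2 =
     {\<psi>. \<exists>R1 R2 \<phi>. P \<subseteq> R1 \<and> P \<subseteq> R2 \<and> \<phi> \<in> F R1 R2 \<and> \<phi> ` P = P \<and>
          A1 = (\<lambda>r. P #>\<^bsub>G\<^esub> r) ` R1 \<and> A2 = (\<lambda>r. P #>\<^bsub>G\<^esub> r) ` R2 \<and>
          \<psi> \<in> extensional A1 \<and> (\<forall>r\<in>R1. \<psi> (P #>\<^bsub>G\<^esub> r) = P #>\<^bsub>G\<^esub> \<phi> r)}"

end

theory Submission
  imports Defs
begin

section \<open>Conjugation, normalizers and cosets\<close>

lemma (in group) inv_mult_cancel_left [simp]: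
  "x \<in> carrier G \<Longrightarrow> y \<in> carrier G \<Longrightarrow> inv x \<otimes> (x \<otimes> y) = y"
  "x \<in> carrier G \<Longrightarrow> y \<in> carrier G \<Longrightarrow> x \<otimes> (inv x \<otimes> y) = y"
  by (simp_all add: m_assoc[symmetric])

lemma (in group) conjmap_closed [simp]:
  "g \<in> carrier G \<Longrightarrow> x \<in> carrier G \<Longrightarrow> conjmap G g x \<in> carrier G"
  unfolding conjmap_def by simp

lemma (in group) conjmap_mult:
  "g \<in> carrier G \<Longrightarrow> x \<in> carrier G \<Longrightarrow> y \<in> carrier G \<Longrightarrow>
     conjmap G g (x \<otimes> y) = conjmap G g x \<otimes> conjmap G g y"
  unfolding conjmap_def by (simp add: m_assoc)

lemma (in group) conjmap_inv:
  "g \<in> carrier G \<Longrightarrow> x \<in> carrier G \<Longrightarrow> conjmap G g (inv x) = inv (conjmap G g x)"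
  unfolding conjmap_def by (simp add: inv_mult_group m_assoc)

lemma (in group) conjmap_comp:
  "g \<in> carrier G \<Longrightarrow> h \<in> carrier G \<Longrightarrow> x \<in> carrier G \<Longrightarrow>
     conjmap G (g \<otimes> h) x = conjmap G g (conjmap G h x)"
  unfolding conjmap_def by (simp add: m_assoc inv_mult_group)

lemma (in group) conjmap_inv_cancel [simp]:
  "g \<in> carrier G \<Longrightarrow> x \<in> carrier G \<Longrightarrow> conjmap G (inv g) (conjmap G g x) = x"
  "g \<in> carrier G \<Longrightarrow> x \<in> carrier G \<Longrightarrow> conjmap G g (conjmap G (inv g) x) = x"
  unfolding conjmap_def by (simp_all add: m_assoc)

lemma (in group) conjmap_image_eq:
  assumes "finite U" "U \<subseteq> carrier G" "g \<in> carrier G" "conjmap G g ` U \<subseteq> U"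
  shows "conjmap G g ` U = U"
proof -
  have "inj_on (conjmap G g) U"
    using assms(2,3) by (metis conjmap_inv_cancel(1) inj_on_inverseI subsetD)
  then show ?thesis using assms(1,4) by (simp add: card_image card_subset_eq)
qed

lemma (in group) normalizerS_eq_normalizer:
  assumes "U \<subseteq> carrier G" shows "normalizerS G U = normalizer G U"
proof -
  have "g <# U #> inv g = conjmap G g ` U" for g
    unfolding l_coset_def r_coset_def conjmap_def by auto
  then show ?thesis
    using assms unfolding normalizerS_def normalizer_def stabilizer_def by auto
qed

lemma (in group) subgroup_normalizerS:
  "U \<subseteq> carrier G \<Longrightarrow> subgroup (normalizerS G U) G"
  by (simp add: normalizerS_eq_normalizer normalizer_imp_subgroup)

lemma (in group) mem_normalizerS_iff:
  assumes "finite U" "U \<subseteq> carrier G"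
  shows "g \<in> normalizerS G U \<longleftrightarrow> g \<in> carrier G \<and> conjmap G g ` U \<subseteq> U"
  using conjmap_image_eq[OF assms] unfolding normalizerS_def by auto

lemma (in group) subgroup_subset_normalizerS:
  assumes U: "subgroup U G" shows "U \<subseteq> normalizerS G U"
proof
  fix x assume x: "x \<in> U"
  have "conjmap G x ` U \<subseteq> U"
    using x U unfolding conjmap_def by (auto intro: subgroup.m_closed subgroup.m_inv_closed)
  moreover have "U \<subseteq> conjmap G x ` U"
  proof
    fix y assume y: "y \<in> U"
    have "conjmap G (inv x) y \<in> U"
      using x y U unfolding conjmap_def by (auto intro: subgroup.m_closed subgroup.m_inv_closed)
    then show "y \<in> conjmap G x ` U"
      using x y subgroup.mem_carrier[OF U] by (metis conjmap_inv_cancel(2) image_eqI)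
  qed
  ultimately show "x \<in> normalizerS G U"
    using x subgroup.mem_carrier[OF U] unfolding normalizerS_def by blast
qed

lemma (in group) rcos_eq_iff:
  assumes P: "subgroup P G" and "x \<in> carrier G" "y \<in> carrier G"
  shows "P #> x = P #> y \<longleftrightarrow> x \<otimes> inv y \<in> P"
proof
  assume "P #> x = P #> y"
  then show "x \<otimes> inv y \<in> P"
    using rcos_self[OF assms(2) P] subgroup.rcos_module_imp[OF P is_group assms(3)] by simp
next
  assume "x \<otimes> inv y \<in> P"
  then have "x \<in> P #> y" by (rule subgroup.rcos_module_rev[OF P is_group assms(3,2)])
  then show "P #> x = P #> y" using repr_independence[OF _ assms(3) P] by simp
qed

lemma (in group) mem_of_rcos_mem_image:
  assumes U: "subgroup U G" "P \<subseteq> U" and P: "subgroup P G" and x: "x \<in> carrier G"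
    and "P #> x \<in> (\<lambda>r. P #> r) ` U"
  shows "x \<in> U"
proof -
  obtain r where r: "r \<in> U" "P #> x = P #> r" using assms(5) by blast
  then have "x \<in> P #> r" using rcos_self[OF x P] by simp
  then obtain q where "q \<in> P" "x = q \<otimes> r" unfolding r_coset_def by blast
  then show ?thesis using r(1) U subgroup.m_closed[OF U(1)] by blast
qed

lemma (in group) subset_of_rcos_image_subset:
  assumes U: "subgroup U G" "P \<subseteq> U" and P: "subgroup P G" and W: "W \<subseteq> carrier G"
    and "(\<lambda>r. P #> r) ` W \<subseteq> (\<lambda>r. P #> r) ` U"
  shows "W \<subseteq> U"
proof
  fix x assume x: "x \<in> W"
  then have "P #> x \<in> (\<lambda>r. P #> r) ` U" using assms(5) by blast
  then show "x \<in> U" by (rule mem_of_rcos_mem_image[OF U P subsetD[OF W x]])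
qed

lemma (in group) rcos_conjmap_cong:
  assumes P: "P \<lhd> G" and h: "h \<in> carrier G" and a: "a \<in> carrier G" and b: "b \<in> carrier G"
    and eq: "P #> a = P #> b"
  shows "P #> conjmap G h a = P #> conjmap G h b"
proof -
  have PG: "subgroup P G" using P normal_imp_subgroup by blast
  have "a \<otimes> inv b \<in> P" using eq rcos_eq_iff[OF PG a b] by simp
  then have "conjmap G h (a \<otimes> inv b) \<in> P"
    using normal_invE(2)[OF P h] unfolding conjmap_def by blast
  then show ?thesis
    using rcos_eq_iff[OF PG] conjmap_mult[OF h a] conjmap_inv[OF h b] h a b by simp
qed

lemma (in group) inv_mult_conjmap_mem:
  assumes N: "N \<lhd> G" and g: "g \<in> N" and x: "x \<in> carrier G"
  shows "inv x \<otimes> conjmap G g x \<in> N"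
proof -
  have NG: "subgroup N G" by (rule normal_imp_subgroup[OF N])
  have "inv x \<otimes> g \<otimes> inv (inv x) \<in> N" by (rule normal_invE(2)[OF N inv_closed[OF x] g])
  then have "inv x \<otimes> g \<otimes> inv (inv x) \<otimes> inv g \<in> N"
    by (rule subgroup.m_closed[OF NG _ subgroup.m_inv_closed[OF NG g]])
  then show ?thesis unfolding conjmap_def using x subgroup.mem_carrier[OF NG g] by (simp add: m_assoc)
qed

lemma restrict_image_subset: "W \<subseteq> A \<Longrightarrow> restrict f A ` W = f ` W"
  by auto

lemma (in group) subgroup_set_mult_normal:
  "Q \<lhd> G \<Longrightarrow> subgroup U G \<Longrightarrow> subgroup (U <#> Q) G"
  using commut_normal[of U Q] mult_norm_subgroup[of Q U] by simp

lemma (in group) subset_set_mult: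
  assumes "subgroup U G" "subgroup Q G"
  shows subset_set_mult_left: "U \<subseteq> U <#> Q" and subset_set_mult_right: "Q \<subseteq> U <#> Q"
proof -
  show "U \<subseteq> U <#> Q"
  proof
    fix u assume u: "u \<in> U"
    then have "u \<otimes> \<one> \<in> U <#> Q"
      unfolding set_mult_def using subgroup.one_closed[OF assms(2)] by (intro UN_I) auto
    then show "u \<in> U <#> Q" using subgroup.mem_carrier[OF assms(1) u] by simp
  qed
  show "Q \<subseteq> U <#> Q"
  proof
    fix q assume q: "q \<in> Q"
    then have "\<one> \<otimes> q \<in> U <#> Q"
      unfolding set_mult_def using subgroup.one_closed[OF assms(1)] by (intro UN_I) auto
    then show "q \<in> U <#> Q" using subgroup.mem_carrier[OF assms(2) q] by simp
  qed
qed

lemma (in group) set_mult_subset_subgroup: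
  assumes "subgroup D G" "A \<subseteq> D" "B \<subseteq> D" shows "A <#> B \<subseteq> D"
proof
  fix x assume "x \<in> A <#> B"
  then obtain a b where "a \<in> A" "b \<in> B" "x = a \<otimes> b" unfolding set_mult_def by blast
  then show "x \<in> D" using subgroup.m_closed[OF assms(1)] assms(2,3) by blast
qed

section \<open>Finite p-groups\<close>

lemma (in group) group_action_of_action:
  assumes closed: "\<And>g x. g \<in> carrier G \<Longrightarrow> x \<in> E \<Longrightarrow> act g x \<in> E"
    and one: "\<And>x. x \<in> E \<Longrightarrow> act \<one> x = x"
    and mult: "\<And>g h x. g \<in> carrier G \<Longrightarrow> h \<in> carrier G \<Longrightarrow> x \<in> E \<Longrightarrow>
                 act (g \<otimes> h) x = act g (act h x)"
  shows "group_action G E (\<lambda>g. restrict (act g) E)"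
proof -
  have bij: "restrict (act g) E \<in> Bij E" if g: "g \<in> carrier G" for g
  proof -
    have "bij_betw (act g) E E"
    proof (rule bij_betwI[where g = "act (inv g)"])
      show "act (inv g) (act g x) = x" if "x \<in> E" for x
        using mult[of "inv g" g x] one[of x] g that by simp
      show "act g (act (inv g) y) = y" if "y \<in> E" for y
        using mult[of g "inv g" y] one[of y] g that by simp
    qed (use closed g in auto)
    then show ?thesis unfolding Bij_def by (simp add: bij_betw_def inj_on_def)
  qed
  have "restrict (act (g \<otimes> h)) E = restrict (act g) E \<otimes>\<^bsub>BijGroup E\<^esub> restrict (act h) E"
    if "g \<in> carrier G" "h \<in> carrier G" for g h
    using bij that by (auto simp: BijGroup_def compose_def mult closed intro!: restrict_ext)
  then have "(\<lambda>g. restrict (act g) E) \<in> hom G (BijGroup E)"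
    using bij unfolding hom_def by (auto simp: BijGroup_def)
  then show ?thesis
    unfolding group_action_def group_hom_def group_hom_axioms_def
    by (simp add: group_BijGroup is_group)
qed

lemma (in group_action) p_group_fixed_point:
  assumes p: "Factorial_Ring.prime p" and ord: "order G = p ^ k"
    and fin: "finite E" and ndvd: "\<not> p dvd card E"
  shows "\<exists>x\<in>E. \<forall>g\<in>carrier G. \<phi> g x = x"
proof (rule ccontr)
  assume no_fixed: "\<not> ?thesis"
  have "p dvd card (orbit G \<phi> x)" if x: "x \<in> E" for x
  proof -
    have "card (orbit G \<phi> x) dvd p ^ k"
      using orbit_stabilizer_theorem[OF x] ord by (metis dvd_triv_left)
    then obtain i where i: "card (orbit G \<phi> x) = p ^ i"
      using divides_primepow_nat[OF p] by auto
    have "orbit G \<phi> x \<noteq> {x}"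
      using no_fixed x unfolding orbit_def by blast
    then have "card (orbit G \<phi> x) \<noteq> 1"
      using orbit_refl[OF x] by (metis card_1_singletonE singletonD)
    then have "i \<noteq> 0" using i by auto
    then show ?thesis using i by (simp add: dvd_power)
  qed
  then have "p dvd (\<Sum>orb\<in>orbits G E \<phi>. card orb)"
    unfolding orbits_def by (auto intro: dvd_sum)
  moreover have "(\<Sum>orb\<in>orbits G E \<phi>. card orb) = card E"
    using disjoint_sum[OF fin, of "\<lambda>_. 1::nat"] by simp
  ultimately show False using ndvd by simp
qed

lemma (in group) p_group_rcoset_fixed_point:
  assumes H: "group H" and ord: "order H = p ^ k" and p: "Factorial_Ring.prime p"
    and \<psi>: "\<psi> \<in> hom H G" and B: "subgroup B G"
    and E: "E \<subseteq> rcosets B" "finite E" "\<not> p dvd card E"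
    and E_closed: "\<And>h C. h \<in> carrier H \<Longrightarrow> C \<in> E \<Longrightarrow> C #> inv (\<psi> h) \<in> E"
  shows "\<exists>\<eta>\<in>carrier G. B #> \<eta> \<in> E \<and> (\<forall>h\<in>carrier H. \<eta> \<otimes> \<psi> h \<otimes> inv \<eta> \<in> B)"
proof -
  interpret H: group H by (rule H)
  interpret \<psi>: group_hom H G \<psi>
    using H is_group \<psi> by (simp add: group_hom_def group_hom_axioms_def)
  have Bc: "B \<subseteq> carrier G" by (rule subgroup.subset[OF B])
  have Ec: "C \<subseteq> carrier G" if "C \<in> E" for C
    using that E(1) subgroup.rcosets_carrier[OF B is_group] by blast
  have "group_action H E (\<lambda>h. restrict (\<lambda>C. C #> inv (\<psi> h)) E)"
  proof (rule H.group_action_of_action)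
    show "C #> inv (\<psi> \<one>\<^bsub>H\<^esub>) = C" if "C \<in> E" for C
      using Ec[OF that] by simp
    show "C #> inv (\<psi> (g \<otimes>\<^bsub>H\<^esub> h)) = C #> inv (\<psi> h) #> inv (\<psi> g)"
      if "g \<in> carrier H" "h \<in> carrier H" "C \<in> E" for g h C
      using that Ec coset_mult_assoc by (simp add: inv_mult_group)
  qed (rule E_closed)
  then obtain C where C: "C \<in> E" and fixed: "\<And>h. h \<in> carrier H \<Longrightarrow> C #> inv (\<psi> h) = C"
    using group_action.p_group_fixed_point[OF _ p ord E(2,3)] by fastforce
  obtain \<eta> where \<eta>: "\<eta> \<in> carrier G" "C = B #> \<eta>"
    using C E(1) unfolding RCOSETS_def by blast
  have "\<eta> \<otimes> \<psi> h \<otimes> inv \<eta> \<in> B" if h: "h \<in> carrier H" for h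
  proof -
    have "B #> (\<eta> \<otimes> inv (\<psi> h)) = B #> \<eta>"
      using fixed[OF h] \<eta> coset_mult_assoc[OF Bc] h by simp
    then have "\<eta> \<otimes> inv (\<psi> h) \<otimes> inv \<eta> \<in> B"
      using rcos_self[OF _ B] subgroup.rcos_module_imp[OF B is_group] \<eta>(1) h by (metis inv_closed \<psi>.hom_closed m_closed)
    then have "inv (\<eta> \<otimes> inv (\<psi> h) \<otimes> inv \<eta>) \<in> B" by (rule subgroup.m_inv_closed[OF B])
    then show ?thesis using \<eta>(1) h by (simp add: inv_mult_group m_assoc)
  qed
  then show ?thesis using \<eta> C by blast
qed

lemma (in group) p_subgroup_conjugate_into:
  assumes fin: "finite (carrier G)" and B: "subgroup B G" and ndvd: "\<not> p dvd card (rcosets B)"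
    and p: "Factorial_Ring.prime p" and H: "group H" and ord: "order H = p ^ k" and \<psi>: "\<psi> \<in> hom H G"
  shows "\<exists>\<eta>\<in>carrier G. \<forall>h\<in>carrier H. \<eta> \<otimes> \<psi> h \<otimes> inv \<eta> \<in> B"
proof -
  have Bc: "B \<subseteq> carrier G" by (rule subgroup.subset[OF B])
  have "C #> inv (\<psi> h) \<in> rcosets B" if h: "h \<in> carrier H" and C: "C \<in> rcosets B" for h C
  proof -
    obtain \<eta> where \<eta>: "\<eta> \<in> carrier G" "C = B #> \<eta>" using C unfolding RCOSETS_def by blast
    have "\<psi> h \<in> carrier G" using \<psi> h unfolding hom_def by blast
    then show ?thesis using \<eta> coset_mult_assoc[OF Bc] rcosetsI[OF Bc] by simp
  qed
  moreover have "finite (rcosets B)"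
    using rcosets_subset_PowG[OF B] fin by (meson finite_Pow_iff finite_subset)
  ultimately show ?thesis
    using p_group_rcoset_fixed_point[OF H ord p \<psi> B subset_refl _ ndvd] by blast
qed

locale p_group = group +
  fixes p :: nat
  assumes prime_p: "Factorial_Ring.prime p" and order_prime_power: "\<exists>n. order G = p ^ n"
begin

lemma finite_carrier: "finite (carrier G)"
  using order_prime_power prime_p unfolding order_def
  by (metis card.infinite not_prime_0 power_eq_0_iff)

lemma card_subgroup_prime_power:
  assumes "subgroup U G" shows "\<exists>b. card U = p ^ b"
proof -
  obtain n where "order G = p ^ n" using order_prime_power by blast
  then have "card U dvd p ^ n" using lagrange[OF assms] by (metis dvd_triv_right)
  then show ?thesis using divides_primepow_nat[OF prime_p] by blast
qed

lemma finite_subgroup: "subgroup U G \<Longrightarrow> finite U"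
  using finite_carrier finite_subset subgroup.subset by blast

lemma card_nontrivial_rcosets_not_dvd:
  assumes U: "subgroup U G" and T: "subgroup T G" and UT: "U \<subset> T"
  shows "\<not> p dvd card ((\<lambda>t. U #> t) ` T - {U})"
proof -
  define cosets where "cosets = (\<lambda>t. U #> t) ` T"
  have Uc: "U \<subseteq> carrier G" using U subgroup.subset by auto
  have "card cosets * card U = card T"
  proof -
    have "rcosets\<^bsub>G\<lparr>carrier := T\<rparr>\<^esub> U = cosets"
      unfolding cosets_def RCOSETS_def r_coset_def by auto
    then show ?thesis
      using group.lagrange[OF subgroup_imp_group[OF T] subgroup_incl[OF U T]] UT
      unfolding order_def by simp
  qed
  moreover obtain a b where a: "card T = p ^ a" and b: "card U = p ^ b"
    using card_subgroup_prime_power U T by metis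
  moreover have "b < a"
    using psubset_card_mono[OF finite_subgroup[OF T] UT] a b prime_p
    by (metis nat_power_less_imp_less prime_gt_0_nat)
  ultimately have "card cosets = p ^ (a - b)"
    using prime_p by (metis le_add_diff_inverse2 less_imp_le_nat mult_right_cancel power_add
        power_not_zero prime_gt_0_nat less_not_refl2)
  then have "p dvd card cosets" using \<open>b < a\<close> by simp
  moreover have "card cosets = card (cosets - {U}) + 1"
  proof -
    have "U \<in> cosets"
      unfolding cosets_def using coset_mult_one[OF Uc] subgroup.one_closed[OF T] by force
    moreover have "finite cosets" unfolding cosets_def using finite_subgroup[OF T] by simp
    ultimately show ?thesis by (metis Suc_eq_plus1 card.remove)
  qed
  ultimately show ?thesis
    unfolding cosets_def using prime_p dvd_add_right_iff
    by (metis not_prime_unit nat_dvd_1_iff_1)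
qed

text \<open>The proper subgroup U of T acts on the nontrivial cosets of U in T; their number is
  \<open>-1\<close> modulo p, so one of them is fixed, and its representatives normalize U.\<close>

lemma normalizer_grows:
  assumes U: "subgroup U G" and T: "subgroup T G" and UT: "U \<subset> T"
  shows "\<exists>a\<in>T - U. conjmap G a ` U = U"
proof -
  have Uc: "U \<subseteq> carrier G" and Tc: "T \<subseteq> carrier G" using U T subgroup.subset by auto
  define E where "E = (\<lambda>t. U #> t) ` T - {U}"
  have ndvd: "\<not> p dvd card E" unfolding E_def by (rule card_nontrivial_rcosets_not_dvd[OF U T UT])
  have closed: "C #> inv u \<in> E" if u: "u \<in> U" and C: "C \<in> E" for u C
  proof -
    obtain t where t: "t \<in> T" "C = U #> t" "U #> t \<noteq> U" using C unfolding E_def by blast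
    have tc: "t \<in> carrier G" and uc: "u \<in> carrier G" using t u Tc Uc by auto
    have "t \<otimes> inv u \<in> T" using t(1) u UT by (meson T psubsetD subgroup.m_closed subgroup.m_inv_closed)
    moreover have "U #> (t \<otimes> inv u) \<noteq> U"
    proof
      assume "U #> (t \<otimes> inv u) = U"
      then have "t \<otimes> inv u \<in> U" using coset_join1 U tc uc by blast
      then have "t \<otimes> inv u \<otimes> u \<in> U" using u subgroup.m_closed[OF U] by blast
      then have "t \<in> U" using tc uc by (simp add: m_assoc)
      then show False using t(3) coset_join2[OF tc U] by simp
    qed
    ultimately show ?thesis
      unfolding E_def using t(2) coset_mult_assoc[OF Uc tc] uc by auto
  qed
  have incl: "(\<lambda>x. x) \<in> hom (G\<lparr>carrier := U\<rparr>) G" unfolding hom_def using Uc by auto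
  have Esub: "E \<subseteq> rcosets U" unfolding E_def RCOSETS_def using Tc by blast
  obtain b where ordU: "order (G\<lparr>carrier := U\<rparr>) = p ^ b"
    using card_subgroup_prime_power[OF U] unfolding order_def by auto
  have finE: "finite E" unfolding E_def using finite_subgroup[OF T] by simp
  obtain \<eta> where \<eta>: "\<eta> \<in> carrier G" "U #> \<eta> \<in> E" "\<And>u. u \<in> U \<Longrightarrow> \<eta> \<otimes> u \<otimes> inv \<eta> \<in> U"
    using p_group_rcoset_fixed_point[OF subgroup_imp_group[OF U] ordU prime_p incl U Esub finE ndvd] closed
    by auto
  obtain t where t: "t \<in> T" "U #> \<eta> = U #> t" "U #> t \<noteq> U" using \<eta>(2) unfolding E_def by auto
  have "\<eta> \<in> U #> t" using repr_independenceD[OF U \<eta>(1) t(2)[symmetric]] .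
  then obtain u where "u \<in> U" "\<eta> = u \<otimes> t" unfolding r_coset_def by blast
  then have "\<eta> \<in> T" using t(1) UT subgroup.m_closed[OF T] by blast
  moreover have "\<eta> \<notin> U" using t(2,3) coset_join2[OF \<eta>(1) U] by auto
  moreover have "conjmap G \<eta> ` U \<subseteq> U" using \<eta>(3) unfolding conjmap_def by blast
  ultimately show ?thesis
    using conjmap_image_eq[OF finite_subgroup[OF U] Uc \<eta>(1)] by blast
qed

end

section \<open>Morphisms of a fusion system\<close>

locale fusion_sys = group G for G (structure) +
  fixes F :: "'a set \<Rightarrow> 'a set \<Rightarrow> ('a \<Rightarrow> 'a) set"
  assumes fusion_system: "fusion_system G F" and finite_carrier: "finite (carrier G)"
begin

lemma mor_subgroup:
  assumes "\<phi> \<in> F U V" shows mor_dom_subgroup: "subgroup U G" and mor_cod_subgroup: "subgroup V G"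
  using fusion_system assms unfolding fusion_system_def by blast+

lemma HomS_subset_mor: "subgroup U G \<Longrightarrow> subgroup V G \<Longrightarrow> HomS G U V \<subseteq> F U V"
  using fusion_system unfolding fusion_system_def by blast

lemma mor_InjHom: "\<phi> \<in> F U V \<Longrightarrow> \<phi> \<in> InjHom G U V"
  using fusion_system mor_subgroup unfolding fusion_system_def by blast

lemma mor_comp: "\<phi> \<in> F U V \<Longrightarrow> \<psi> \<in> F V W \<Longrightarrow> restrict (\<psi> \<circ> \<phi>) U \<in> F U W"
  using fusion_system unfolding fusion_system_def by blast

lemma mor_onto_image: "\<phi> \<in> F U V \<Longrightarrow> \<phi> \<in> F U (\<phi> ` U)"
  using fusion_system unfolding fusion_system_def by blast

lemma mor_inverse: "\<phi> \<in> F U V \<Longrightarrow> restrict (inv_into U \<phi>) (\<phi> ` U) \<in> F (\<phi> ` U) U"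
  using fusion_system unfolding fusion_system_def by blast

lemma mor_extensional: "\<phi> \<in> F U V \<Longrightarrow> \<phi> \<in> extensional U"
  and mor_inj_on: "\<phi> \<in> F U V \<Longrightarrow> inj_on \<phi> U"
  and mor_closed: "\<phi> \<in> F U V \<Longrightarrow> x \<in> U \<Longrightarrow> \<phi> x \<in> V"
  and mor_mult: "\<phi> \<in> F U V \<Longrightarrow> x \<in> U \<Longrightarrow> y \<in> U \<Longrightarrow> \<phi> (x \<otimes> y) = \<phi> x \<otimes> \<phi> y"
  using mor_InjHom unfolding InjHom_def hom_def by (auto simp: Pi_iff)

lemma mor_carrier: "\<phi> \<in> F U V \<Longrightarrow> x \<in> U \<Longrightarrow> \<phi> x \<in> carrier G"
  using mor_closed mor_cod_subgroup subgroup.mem_carrier by metis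

lemma mor_image_subset: "\<phi> \<in> F U V \<Longrightarrow> \<phi> ` U \<subseteq> V"
  using mor_closed by blast

lemma mor_image_subgroup: "\<phi> \<in> F U V \<Longrightarrow> subgroup (\<phi> ` U) G"
  using mor_onto_image mor_cod_subgroup by blast

lemma mor_hom_group: "\<phi> \<in> F U V \<Longrightarrow> group_hom (G\<lparr>carrier := U\<rparr>) G \<phi>"
  using mor_dom_subgroup mor_carrier mor_mult
  by (auto simp: group_hom_def group_hom_axioms_def hom_def subgroup_imp_group is_group)

lemma mor_inv: "\<phi> \<in> F U V \<Longrightarrow> x \<in> U \<Longrightarrow> \<phi> (inv x) = inv (\<phi> x)"
  using group_hom.hom_inv[OF mor_hom_group] mor_dom_subgroup m_inv_consistent by fastforce

lemma conj_mor:
  assumes "subgroup U G" "subgroup V G" "g \<in> carrier G" "conjmap G g ` U \<subseteq> V"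
  shows "restrict (conjmap G g) U \<in> F U V"
  using HomS_subset_mor[OF assms(1,2)] assms(3,4) unfolding HomS_def by blast

lemma restrict_id_mor:
  assumes U: "subgroup U G" and V: "subgroup V G" and UV: "U \<subseteq> V"
  shows "restrict (\<lambda>x. x) U \<in> F U V"
proof -
  have "restrict (conjmap G \<one>) U = restrict (\<lambda>x. x) U"
    using subgroup.subset[OF U] unfolding conjmap_def by (intro restrict_ext) auto
  moreover have "conjmap G \<one> ` U \<subseteq> V"
    using subgroup.subset[OF U] UV unfolding conjmap_def by (auto simp: subsetD)
  ultimately show ?thesis using conj_mor[OF U V one_closed] by simp
qed

lemma mor_restrict:
  assumes \<phi>: "\<phi> \<in> F U V" and U': "subgroup U' G" "U' \<subseteq> U" and V': "subgroup V' G" "\<phi> ` U' \<subseteq> V'"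
  shows "restrict \<phi> U' \<in> F U' V'"
proof -
  have "restrict (\<phi> \<circ> restrict (\<lambda>x. x) U') U' = restrict \<phi> U'" by (intro restrict_ext) auto
  then have "restrict \<phi> U' \<in> F U' V"
    using mor_comp[OF restrict_id_mor[OF U'(1) mor_dom_subgroup[OF \<phi>] U'(2)] \<phi>] by simp
  then have 1: "restrict \<phi> U' \<in> F U' (\<phi> ` U')" using mor_onto_image by fastforce
  have "restrict (restrict (\<lambda>x. x) (\<phi> ` U') \<circ> restrict \<phi> U') U' = restrict \<phi> U'"
    by (intro restrict_ext) auto
  then show ?thesis using mor_comp[OF 1 restrict_id_mor[OF mor_cod_subgroup[OF 1] V']] by simp
qed

lemma mor_restrict_onto:
  assumes \<phi>: "\<phi> \<in> F U V" and W: "subgroup W G" "W \<subseteq> U"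
  shows "restrict \<phi> W \<in> F W (\<phi> ` W)"
proof -
  have "restrict \<phi> W \<in> F W V"
    using mor_restrict[OF \<phi> W mor_cod_subgroup[OF \<phi>]] mor_image_subset[OF \<phi>] W(2) by blast
  then show ?thesis using mor_onto_image by fastforce
qed

lemma mor_change_cod:
  assumes "\<phi> \<in> F U V" "subgroup V' G" "\<phi> ` U \<subseteq> V'" shows "\<phi> \<in> F U V'"
proof -
  have "restrict \<phi> U \<in> F U V'"
    by (rule mor_restrict[OF assms(1) mor_dom_subgroup[OF assms(1)] subset_refl assms(2,3)])
  then show ?thesis using mor_extensional[OF assms(1)] by (simp add: extensional_restrict)
qed

lemma mor_to_carrier: "\<phi> \<in> F U V \<Longrightarrow> \<phi> \<in> F U (carrier G)"
  using mor_change_cod subgroup_self mor_carrier by blast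

lemma card_mor_image: "\<phi> \<in> F U V \<Longrightarrow> W \<subseteq> U \<Longrightarrow> card (\<phi> ` W) = card W"
  by (rule card_image[OF inj_on_subset[OF mor_inj_on]])

lemma finite_subgroup: "subgroup U G \<Longrightarrow> finite U"
  using finite_carrier finite_subset subgroup.subset by blast

lemma mor_image_eq:
  assumes "\<phi> \<in> F U V" "W \<subseteq> U" "\<phi> ` W \<subseteq> W" shows "\<phi> ` W = W"
proof -
  have "finite W" using finite_subgroup[OF mor_dom_subgroup[OF assms(1)]] assms(2) finite_subset by blast
  then show ?thesis using card_subset_eq assms(3) card_mor_image[OF assms(1,2)] by blast
qed

lemma aut_image_eq: "\<phi> \<in> F U U \<Longrightarrow> \<phi> ` U = U"
  by (rule mor_image_eq[OF _ subset_refl mor_image_subset])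

lemma inverse_mor_apply [simp]:
  "\<phi> \<in> F U V \<Longrightarrow> x \<in> U \<Longrightarrow> restrict (inv_into U \<phi>) (\<phi> ` U) (\<phi> x) = x"
  by (simp add: inv_into_f_f[OF mor_inj_on])

lemma mor_inverse_apply [simp]:
  "y \<in> \<phi> ` U \<Longrightarrow> \<phi> (restrict (inv_into U \<phi>) (\<phi> ` U) y) = y"
  by (simp add: f_inv_into_f)

lemma finite_mor: "subgroup U G \<Longrightarrow> finite (F U V)"
proof -
  assume U: "subgroup U G"
  have "\<phi> \<in> PiE U (\<lambda>_. carrier G)" if "\<phi> \<in> F U V" for \<phi>
    using mor_extensional[OF that] mor_carrier[OF that] by (simp add: PiE_iff)
  then have "F U V \<subseteq> PiE U (\<lambda>_. carrier G)" by blast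
  then show ?thesis by (rule finite_subset) (simp add: finite_PiE finite_subgroup[OF U] finite_carrier)
qed

lemma mor_image_set_mult:
  assumes \<phi>: "\<phi> \<in> F D V" and "A \<subseteq> D" "B \<subseteq> D" shows "\<phi> ` (A <#> B) = \<phi> ` A <#> \<phi> ` B"
proof -
  have "\<phi> (a \<otimes> b) = \<phi> a \<otimes> \<phi> b" if "a \<in> A" "b \<in> B" for a b
    using mor_mult[OF \<phi>] that assms(2,3) by blast
  then show ?thesis unfolding set_mult_def by (auto simp: image_iff) (metis)
qed

definition AutF :: "'a set \<Rightarrow> ('a \<Rightarrow> 'a) monoid" where
  "AutF U = \<lparr>carrier = F U U, monoid.mult = (\<lambda>f g. restrict (f \<circ> g) U), one = restrict (\<lambda>x. x) U\<rparr>"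

lemma AutF_carrier [simp]: "carrier (AutF U) = F U U"
  and AutF_mult [simp]: "f \<otimes>\<^bsub>AutF U\<^esub> g = restrict (f \<circ> g) U"
  and AutF_one [simp]: "\<one>\<^bsub>AutF U\<^esub> = restrict (\<lambda>x. x) U"
  unfolding AutF_def by simp_all

lemma aut_inverse: "f \<in> F U U \<Longrightarrow> restrict (inv_into U f) U \<in> F U U"
  using mor_inverse aut_image_eq by fastforce

lemma aut_inverse_apply [simp]:
  "f \<in> F U U \<Longrightarrow> x \<in> U \<Longrightarrow> restrict (inv_into U f) U (f x) = x"
  "f \<in> F U U \<Longrightarrow> x \<in> U \<Longrightarrow> f (restrict (inv_into U f) U x) = x"
  using inverse_mor_apply[of f U U x] mor_inverse_apply[of x f U] aut_image_eq[of f U] by simp_all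

lemma AutF_group: assumes U: "subgroup U G" shows "group (AutF U)"
proof (rule groupI)
  show "\<one>\<^bsub>AutF U\<^esub> \<in> carrier (AutF U)" using restrict_id_mor[OF U U] by simp
next
  fix f g assume "f \<in> carrier (AutF U)" "g \<in> carrier (AutF U)"
  then show "f \<otimes>\<^bsub>AutF U\<^esub> g \<in> carrier (AutF U)" by (simp add: mor_comp)
next
  fix f g h assume "f \<in> carrier (AutF U)" "g \<in> carrier (AutF U)" "h \<in> carrier (AutF U)"
  then have "h x \<in> U" if "x \<in> U" for x using that mor_closed by simp
  then show "f \<otimes>\<^bsub>AutF U\<^esub> g \<otimes>\<^bsub>AutF U\<^esub> h = f \<otimes>\<^bsub>AutF U\<^esub> (g \<otimes>\<^bsub>AutF U\<^esub> h)"
    by (auto intro!: restrict_ext)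
next
  fix f assume "f \<in> carrier (AutF U)"
  then have f: "f \<in> F U U" by simp
  show "\<one>\<^bsub>AutF U\<^esub> \<otimes>\<^bsub>AutF U\<^esub> f = f"
  proof (rule extensionalityI[OF _ mor_extensional[OF f]])
    show "(\<one>\<^bsub>AutF U\<^esub> \<otimes>\<^bsub>AutF U\<^esub> f) x = f x" if "x \<in> U" for x
      using that mor_closed[OF f that] by simp
  qed simp
  have "restrict (inv_into U f) U \<otimes>\<^bsub>AutF U\<^esub> f = \<one>\<^bsub>AutF U\<^esub>"
    using f by (auto intro!: restrict_ext simp: mor_closed inv_into_f_f[OF mor_inj_on[OF f]])
  then show "\<exists>g\<in>carrier (AutF U). g \<otimes>\<^bsub>AutF U\<^esub> f = \<one>\<^bsub>AutF U\<^esub>"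
    using aut_inverse[OF f] by (intro bexI) simp_all
qed

lemma AutF_inv:
  assumes U: "subgroup U G" and f: "f \<in> F U U" shows "inv\<^bsub>AutF U\<^esub> f = restrict (inv_into U f) U"
proof (rule group.inv_equality[OF AutF_group[OF U]])
  show "restrict (inv_into U f) U \<otimes>\<^bsub>AutF U\<^esub> f = \<one>\<^bsub>AutF U\<^esub>"
    using f by (auto intro!: restrict_ext simp: mor_closed inv_into_f_f[OF mor_inj_on[OF f]])
qed (use f aut_inverse in simp_all)

lemma normalizerS_subset_carrier: "normalizerS G R \<subseteq> carrier G"
  unfolding normalizerS_def by blast

lemma normalizerS_conj_image: "g \<in> normalizerS G R \<Longrightarrow> conjmap G g ` R = R"
  unfolding normalizerS_def by blast

definition conj_transport :: "'a set \<Rightarrow> ('a \<Rightarrow> 'a) \<Rightarrow> 'a \<Rightarrow> 'a \<Rightarrow> 'a" where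
  "conj_transport R \<beta> g = restrict (\<lambda>y. \<beta> (conjmap G g (inv_into R \<beta> y))) (\<beta> ` R)"

lemma conj_transport_apply:
  "\<beta> \<in> F R V \<Longrightarrow> x \<in> R \<Longrightarrow> conj_transport R \<beta> g (\<beta> x) = \<beta> (conjmap G g x)"
  unfolding conj_transport_def by (simp add: inv_into_f_f[OF mor_inj_on])

lemma conj_transport_mor:
  assumes \<beta>: "\<beta> \<in> F R V" and g: "g \<in> normalizerS G R"
  shows "conj_transport R \<beta> g \<in> F (\<beta> ` R) (\<beta> ` R)"
proof -
  have R: "subgroup R G" by (rule mor_dom_subgroup[OF \<beta>])
  have c: "restrict (conjmap G g) R \<in> F R R"
    using conj_mor[OF R R] normalizerS_conj_image[OF g] normalizerS_subset_carrier g by blast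
  have "restrict (\<beta> \<circ> restrict (restrict (conjmap G g) R \<circ> restrict (inv_into R \<beta>) (\<beta> ` R)) (\<beta> ` R))
          (\<beta> ` R) \<in> F (\<beta> ` R) (\<beta> ` R)"
    by (rule mor_comp[OF mor_comp[OF mor_inverse[OF \<beta>] c] mor_onto_image[OF \<beta>]])
  moreover have "restrict (\<beta> \<circ> restrict (restrict (conjmap G g) R \<circ> restrict (inv_into R \<beta>) (\<beta> ` R)) (\<beta> ` R))
          (\<beta> ` R) = conj_transport R \<beta> g"
    unfolding conj_transport_def by (intro restrict_ext) (simp add: inv_into_into)
  ultimately show ?thesis by simp
qed

lemma conj_transport_hom:
  assumes \<beta>: "\<beta> \<in> F R V"
  shows "conj_transport R \<beta> \<in> hom (G\<lparr>carrier := normalizerS G R\<rparr>) (AutF (\<beta> ` R))"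
proof -
  have "conj_transport R \<beta> (g \<otimes> h) = restrict (conj_transport R \<beta> g \<circ> conj_transport R \<beta> h) (\<beta> ` R)"
    if g: "g \<in> normalizerS G R" and h: "h \<in> normalizerS G R" for g h
    unfolding conj_transport_def[of R \<beta> "g \<otimes> h"]
  proof (rule restrict_ext)
    fix y assume "y \<in> \<beta> ` R"
    then obtain x where x: "x \<in> R" "y = \<beta> x" by blast
    have hx: "conjmap G h x \<in> R" using normalizerS_conj_image[OF h] x(1) by blast
    have "x \<in> carrier G" using x(1) subgroup.mem_carrier[OF mor_dom_subgroup[OF \<beta>]] by blast
    then have "conjmap G (g \<otimes> h) x = conjmap G g (conjmap G h x)"
      using conjmap_comp g h normalizerS_subset_carrier by blast
    then show "\<beta> (conjmap G (g \<otimes> h) (inv_into R \<beta> y)) = (conj_transport R \<beta> g \<circ> conj_transport R \<beta> h) y"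
      using x hx conj_transport_apply[OF \<beta>] by (simp add: inv_into_f_f[OF mor_inj_on[OF \<beta>]])
  qed
  then show ?thesis
    unfolding hom_def using conj_transport_mor[OF \<beta>] by auto
qed

lemma conj_transport_comp:
  assumes \<beta>: "\<beta> \<in> F R V" and \<eta>: "\<eta> \<in> F (\<beta> ` R) (\<beta> ` R)" and g: "g \<in> normalizerS G R"
  shows "conj_transport R (restrict (\<eta> \<circ> \<beta>) R) g
           = \<eta> \<otimes>\<^bsub>AutF (\<beta> ` R)\<^esub> conj_transport R \<beta> g \<otimes>\<^bsub>AutF (\<beta> ` R)\<^esub> inv\<^bsub>AutF (\<beta> ` R)\<^esub> \<eta>"
proof -
  define \<alpha> where "\<alpha> = restrict (\<eta> \<circ> \<beta>) R"
  have \<alpha>: "\<alpha> \<in> F R (\<beta> ` R)" unfolding \<alpha>_def by (rule mor_comp[OF mor_onto_image[OF \<beta>] \<eta>])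
  have \<alpha>R: "\<alpha> ` R = \<beta> ` R" unfolding \<alpha>_def using aut_image_eq[OF \<eta>] by (auto simp: image_comp[symmetric])
  have R: "subgroup R G" by (rule mor_dom_subgroup[OF \<beta>])
  have gR: "conjmap G g x \<in> R" if "x \<in> R" for x using normalizerS_conj_image[OF g] that by blast
  show ?thesis unfolding \<alpha>_def[symmetric]
  proof (rule extensionalityI[of _ "\<beta> ` R"])
    show "conj_transport R \<alpha> g \<in> extensional (\<beta> ` R)"
      using \<alpha>R unfolding conj_transport_def by simp
    show "\<eta> \<otimes>\<^bsub>AutF (\<beta> ` R)\<^esub> conj_transport R \<beta> g \<otimes>\<^bsub>AutF (\<beta> ` R)\<^esub> inv\<^bsub>AutF (\<beta> ` R)\<^esub> \<eta>
          \<in> extensional (\<beta> ` R)" by simp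
    fix y assume "y \<in> \<beta> ` R"
    then obtain x where x: "x \<in> R" "y = \<eta> (\<beta> x)" using aut_image_eq[OF \<eta>] by auto
    have "(\<eta> \<otimes>\<^bsub>AutF (\<beta> ` R)\<^esub> conj_transport R \<beta> g \<otimes>\<^bsub>AutF (\<beta> ` R)\<^esub> inv\<^bsub>AutF (\<beta> ` R)\<^esub> \<eta>) y
          = \<eta> (\<beta> (conjmap G g x))"
    proof -
      have bx: "\<beta> x \<in> \<beta> ` R" using x(1) by blast
      then show ?thesis
        using x mor_closed[OF \<eta> bx] conj_transport_apply[OF \<beta> x(1)] inv_into_f_f[OF mor_inj_on[OF \<eta>] bx]
        by (simp add: AutF_inv[OF mor_image_subgroup[OF \<beta>] \<eta>])
    qed
    moreover have "conj_transport R \<alpha> g y = \<eta> (\<beta> (conjmap G g x))"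
      using conj_transport_apply[OF \<alpha> x(1)] x gR[OF x(1)] unfolding \<alpha>_def by simp
    ultimately show "conj_transport R \<alpha> g y = (\<eta> \<otimes>\<^bsub>AutF (\<beta> ` R)\<^esub> conj_transport R \<beta> g
        \<otimes>\<^bsub>AutF (\<beta> ` R)\<^esub> inv\<^bsub>AutF (\<beta> ` R)\<^esub> \<eta>) y" by simp
  qed
qed

lemma mem_N_phi_of_conj_transport:
  assumes \<beta>: "\<beta> \<in> F R V" and g: "g \<in> normalizerS G R"
    and hom: "conj_transport R \<beta> g \<in> HomS G (\<beta> ` R) (\<beta> ` R)"
  shows "g \<in> N_phi G R \<beta>"
proof -
  obtain h where h: "h \<in> carrier G" "conj_transport R \<beta> g = restrict (conjmap G h) (\<beta> ` R)"
    using hom unfolding HomS_def by blast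
  have "\<beta> (conjmap G g x) = conjmap G h (\<beta> x)" if "x \<in> R" for x
    using fun_cong[OF h(2), of "\<beta> x"] conj_transport_apply[OF \<beta> that] that by simp
  then show ?thesis unfolding N_phi_def using g h(1) by blast
qed

lemma HomS_eq_conj_transport_image:
  assumes R: "subgroup R G"
  shows "HomS G R R = conj_transport R (restrict (\<lambda>x. x) R) ` normalizerS G R"
proof -
  have "inv_into R (\<lambda>x\<in>R. x) y = y" if "y \<in> R" for y
    using that by (intro inv_into_f_eq) (auto simp: inj_on_def)
  then have "conj_transport R (restrict (\<lambda>x. x) R) g = restrict (conjmap G g) R"
    if "g \<in> normalizerS G R" for g
    using normalizerS_conj_image[OF that] unfolding conj_transport_def
    by (auto intro!: restrict_ext)
  then show ?thesis
    unfolding HomS_def using mem_normalizerS_iff[OF finite_subgroup[OF R] subgroup.subset[OF R]]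
    by auto
qed

lemma subgroup_HomS_AutF:
  assumes R: "subgroup R G" shows "subgroup (HomS G R R) (AutF R)"
proof -
  have "group_hom (G\<lparr>carrier := normalizerS G R\<rparr>) (AutF R) (conj_transport R (restrict (\<lambda>x. x) R))"
    using conj_transport_hom[OF restrict_id_mor[OF R R subset_refl]] AutF_group[OF R]
      subgroup_imp_group[OF subgroup_normalizerS[OF subgroup.subset[OF R]]]
    by (simp add: group_hom_def group_hom_axioms_def)
  then show ?thesis
    using group_hom.img_is_subgroup HomS_eq_conj_transport_image[OF R] by fastforce
qed

lemma card_rcosets_HomS:
  assumes R: "subgroup R G" and m: "card (F R R) = card (HomS G R R) * m"
  shows "card (rcosets\<^bsub>AutF R\<^esub> (HomS G R R)) = m"
proof -
  have "card (rcosets\<^bsub>AutF R\<^esub> (HomS G R R)) * card (HomS G R R) = card (F R R)"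
    using group.lagrange[OF AutF_group[OF R] subgroup_HomS_AutF[OF R]] unfolding order_def by simp
  moreover have "finite (HomS G R R)"
    using finite_mor[OF R] HomS_subset_mor[OF R R] finite_subset by blast
  moreover have "HomS G R R \<noteq> {}"
    using subgroup.one_closed[OF subgroup_HomS_AutF[OF R]] by blast
  ultimately show ?thesis using m by (simp add: mult.commute)
qed

lemma HomS_of_conj_comp:
  assumes \<theta>: "\<theta> \<in> F R R" and h: "h \<in> normalizerS G R"
    and hom: "restrict (restrict (conjmap G (inv h)) R \<circ> \<theta>) R \<in> HomS G R R"
  shows "\<theta> \<in> HomS G R R"
proof -
  obtain k where k: "k \<in> carrier G" "restrict (restrict (conjmap G (inv h)) R \<circ> \<theta>) R = restrict (conjmap G k) R"
    using hom unfolding HomS_def by blast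
  have hc: "h \<in> carrier G" using h normalizerS_subset_carrier by blast
  have \<theta>_conj: "\<theta> y = conjmap G (h \<otimes> k) y" if y: "y \<in> R" for y
  proof -
    have yc: "y \<in> carrier G" using y subgroup.mem_carrier[OF mor_dom_subgroup[OF \<theta>]] by blast
    have "conjmap G (inv h) (\<theta> y) = conjmap G k y" using fun_cong[OF k(2), of y] y mor_closed[OF \<theta> y] by simp
    then show ?thesis using conjmap_comp[OF hc k(1) yc] conjmap_inv_cancel(2)[OF hc mor_carrier[OF \<theta> y]]
      by metis
  qed
  then have "\<theta> = restrict (conjmap G (h \<otimes> k)) R"
    using mor_extensional[OF \<theta>] by (intro extensionalityI[of _ R]) auto
  moreover have "conjmap G (h \<otimes> k) ` R \<subseteq> R" using \<theta>_conj mor_closed[OF \<theta>] by auto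
  ultimately show ?thesis unfolding HomS_def using hc k(1) by blast
qed

lemma normalizes_of_conj_mod:
  assumes P: "subgroup P G" "P \<subseteq> R" and \<gamma>: "\<gamma> \<in> F R R" and g: "g \<in> normalizerS G R"
    and h: "h \<in> carrier G"
    and key: "\<And>x. x \<in> R \<Longrightarrow> P #> \<gamma> (conjmap G g x) = P #> conjmap G h (\<gamma> x)"
  shows "h \<in> normalizerS G R"
proof -
  have R: "subgroup R G" by (rule mor_dom_subgroup[OF \<gamma>])
  have "conjmap G h ` R \<subseteq> R"
  proof
    fix z assume "z \<in> conjmap G h ` R"
    then obtain y where y: "y \<in> R" and z: "z = conjmap G h y" by blast
    obtain x where x: "x \<in> R" "y = \<gamma> x" using y aut_image_eq[OF \<gamma>] by blast
    have gx: "conjmap G g x \<in> R" using normalizerS_conj_image[OF g] x(1) by blast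
    have "z \<in> P #> \<gamma> (conjmap G g x)"
      using key[OF x(1)] rcos_self[OF conjmap_closed[OF h mor_carrier[OF \<gamma> x(1)]] P(1)] x(2) z
      by simp
    then obtain q where "q \<in> P" "z = q \<otimes> \<gamma> (conjmap G g x)" unfolding r_coset_def by blast
    then show "z \<in> R" using mor_closed[OF \<gamma> gx] P(2) subgroup.m_closed[OF R] by blast
  qed
  then show ?thesis
    using mem_normalizerS_iff[OF finite_subgroup[OF R] subgroup.subset[OF R]] h by simp
qed

lemma subgroup_subset_N_phi:
  assumes \<gamma>: "\<gamma> \<in> F R V" shows "R \<subseteq> N_phi G R \<gamma>"
proof
  fix x assume x: "x \<in> R"
  have R: "subgroup R G" by (rule mor_dom_subgroup[OF \<gamma>])
  have "\<gamma> (conjmap G x y) = conjmap G (\<gamma> x) (\<gamma> y)" if y: "y \<in> R" for y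
  proof -
    have "x \<otimes> y \<in> R" "inv x \<in> R" using subgroup.m_closed[OF R x y] subgroup.m_inv_closed[OF R x] by auto
    then show ?thesis unfolding conjmap_def using mor_mult[OF \<gamma>] mor_inv[OF \<gamma> x] x y by simp
  qed
  then show "x \<in> N_phi G R \<gamma>"
    unfolding N_phi_def using subgroup_subset_normalizerS[OF R] x mor_carrier[OF \<gamma> x] by blast
qed

lemma subgroup_N_phi:
  assumes \<gamma>: "\<gamma> \<in> F R V" shows "subgroup (N_phi G R \<gamma>) G"
proof -
  have R: "subgroup R G" by (rule mor_dom_subgroup[OF \<gamma>])
  have N: "subgroup (normalizerS G R) G" by (rule subgroup_normalizerS[OF subgroup.subset[OF R]])
  have Rc: "\<And>x. x \<in> R \<Longrightarrow> x \<in> carrier G" using subgroup.mem_carrier[OF R] by blast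
  have cR: "conjmap G g x \<in> R" if "g \<in> normalizerS G R" "x \<in> R" for g x
    using normalizerS_conj_image that by blast
  show ?thesis
  proof (rule subgroupI)
    show "N_phi G R \<gamma> \<subseteq> carrier G" unfolding N_phi_def using normalizerS_subset_carrier by blast
    show "N_phi G R \<gamma> \<noteq> {}" using subgroup_subset_N_phi[OF \<gamma>] subgroup.one_closed[OF R] by blast
  next
    fix g assume "g \<in> N_phi G R \<gamma>"
    then obtain h where g: "g \<in> normalizerS G R" and h: "h \<in> carrier G"
      and eq: "\<And>x. x \<in> R \<Longrightarrow> \<gamma> (conjmap G g x) = conjmap G h (\<gamma> x)" unfolding N_phi_def by blast
    have gc: "g \<in> carrier G" using g normalizerS_subset_carrier by blast
    have ig: "inv g \<in> normalizerS G R" by (rule subgroup.m_inv_closed[OF N g])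
    have "\<gamma> (conjmap G (inv g) x) = conjmap G (inv h) (\<gamma> x)" if x: "x \<in> R" for x
      using eq[OF cR[OF ig x]] gc h Rc[OF x] mor_carrier[OF \<gamma> cR[OF ig x]]
      by (metis conjmap_inv_cancel)
    then show "inv g \<in> N_phi G R \<gamma>" unfolding N_phi_def using ig h by blast
  next
    fix g g' assume "g \<in> N_phi G R \<gamma>" "g' \<in> N_phi G R \<gamma>"
    then obtain h h' where g: "g \<in> normalizerS G R" "h \<in> carrier G"
      "\<And>x. x \<in> R \<Longrightarrow> \<gamma> (conjmap G g x) = conjmap G h (\<gamma> x)"
      and g': "g' \<in> normalizerS G R" "h' \<in> carrier G"
      "\<And>x. x \<in> R \<Longrightarrow> \<gamma> (conjmap G g' x) = conjmap G h' (\<gamma> x)"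
      unfolding N_phi_def by blast
    have "\<gamma> (conjmap G (g \<otimes> g') x) = conjmap G (h \<otimes> h') (\<gamma> x)" if x: "x \<in> R" for x
      using g(3)[OF cR[OF g'(1) x]] g'(3)[OF x] conjmap_comp g(2) g'(2) Rc[OF x]
        mor_carrier[OF \<gamma> x] g(1) g'(1) normalizerS_subset_carrier by (metis subsetD)
    then show "g \<otimes> g' \<in> N_phi G R \<gamma>"
      unfolding N_phi_def using subgroup.m_closed[OF N g(1) g'(1)] g(2) g'(2) by blast
  qed
qed

end

section \<open>Stabilizers of a subgroup series\<close>

context fusion_sys
begin

text \<open>The automorphisms of R acting trivially on Z and on R/Z (the stabilizer of the series
  \<open>1 \<le> Z \<le> R\<close>), in the form \<open>\<delta> y \<in> y Z\<close>.\<close>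

definition series_stabilizer :: "'a set \<Rightarrow> 'a set \<Rightarrow> ('a \<Rightarrow> 'a) set" where
  "series_stabilizer R Z = {\<delta> \<in> F R R. (\<forall>z\<in>Z. \<delta> z = z) \<and> (\<forall>y\<in>R. inv y \<otimes> \<delta> y \<in> Z)}"

lemma series_stabilizer_mult:
  assumes Z: "subgroup Z G" "Z \<subseteq> R" and \<delta>: "\<delta> \<in> series_stabilizer R Z" and y: "y \<in> R"
    and w: "w \<in> Z"
  shows "\<delta> (y \<otimes> w) = \<delta> y \<otimes> w"
  using \<delta> mor_mult[of \<delta> R R y w] y w Z(2) unfolding series_stabilizer_def by auto

lemma series_stabilizer_comp_eq:
  assumes Z: "subgroup Z G" "Z \<subseteq> R" and \<delta>: "\<delta> \<in> series_stabilizer R Z"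
    and \<epsilon>: "\<epsilon> \<in> series_stabilizer R Z" and y: "y \<in> R"
  shows "inv y \<otimes> \<delta> (\<epsilon> y) = (inv y \<otimes> \<delta> y) \<otimes> (inv y \<otimes> \<epsilon> y)"
proof -
  have \<delta>F: "\<delta> \<in> F R R" and \<epsilon>F: "\<epsilon> \<in> F R R" using \<delta> \<epsilon> unfolding series_stabilizer_def by auto
  have yc: "y \<in> carrier G" using subgroup.mem_carrier[OF mor_dom_subgroup[OF \<delta>F] y] .
  have w: "inv y \<otimes> \<epsilon> y \<in> Z" using \<epsilon> y unfolding series_stabilizer_def by blast
  have "\<delta> (\<epsilon> y) = \<delta> y \<otimes> (inv y \<otimes> \<epsilon> y)"
    using series_stabilizer_mult[OF Z \<delta> y w] yc mor_carrier[OF \<epsilon>F y] by (simp add: m_assoc[symmetric])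
  then show ?thesis using yc mor_carrier[OF \<delta>F y] mor_carrier[OF \<epsilon>F y] by (simp add: m_assoc)
qed

lemma subgroup_series_stabilizer:
  assumes R: "subgroup R G" and Z: "subgroup Z G" "Z \<subseteq> R"
  shows "subgroup (series_stabilizer R Z) (AutF R)"
proof (rule group.subgroupI[OF AutF_group[OF R]])
  have Rc: "\<And>y. y \<in> R \<Longrightarrow> y \<in> carrier G" using subgroup.mem_carrier[OF R] by blast
  show "series_stabilizer R Z \<subseteq> carrier (AutF R)" unfolding series_stabilizer_def by auto
  have "inv y \<otimes> restrict (\<lambda>x. x) R y \<in> Z" if "y \<in> R" for y
    using that Rc subgroup.one_closed[OF Z(1)] by simp
  then have "restrict (\<lambda>x. x) R \<in> series_stabilizer R Z"
    using restrict_id_mor[OF R R subset_refl] Z(2) unfolding series_stabilizer_def by auto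
  then show "series_stabilizer R Z \<noteq> {}" by blast
next
  fix \<delta> assume \<delta>: "\<delta> \<in> series_stabilizer R Z"
  then have \<delta>F: "\<delta> \<in> F R R" unfolding series_stabilizer_def by blast
  let ?\<delta>' = "restrict (inv_into R \<delta>) R"
  have "?\<delta>' z = z" if "z \<in> Z" for z
    using \<delta> that Z(2) aut_inverse_apply(1)[OF \<delta>F, of z] unfolding series_stabilizer_def by auto
  moreover have "inv y \<otimes> ?\<delta>' y \<in> Z" if y: "y \<in> R" for y
  proof -
    have x: "?\<delta>' y \<in> R" using mor_closed[OF aut_inverse[OF \<delta>F] y] .
    then have "inv (?\<delta>' y) \<otimes> \<delta> (?\<delta>' y) \<in> Z" using \<delta> unfolding series_stabilizer_def by blast
    then have "inv (?\<delta>' y) \<otimes> y \<in> Z" using aut_inverse_apply(2)[OF \<delta>F y] by simp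
    then have "inv (inv (?\<delta>' y) \<otimes> y) \<in> Z" by (rule subgroup.m_inv_closed[OF Z(1)])
    then show ?thesis using x y subgroup.mem_carrier[OF R] by (simp add: inv_mult_group)
  qed
  ultimately show "inv\<^bsub>AutF R\<^esub> \<delta> \<in> series_stabilizer R Z"
    unfolding AutF_inv[OF R \<delta>F] series_stabilizer_def using aut_inverse[OF \<delta>F] by blast
next
  fix \<delta> \<epsilon> assume \<delta>: "\<delta> \<in> series_stabilizer R Z" and \<epsilon>: "\<epsilon> \<in> series_stabilizer R Z"
  then have \<delta>F: "\<delta> \<in> F R R" and \<epsilon>F: "\<epsilon> \<in> F R R" unfolding series_stabilizer_def by auto
  have "inv y \<otimes> \<delta> (\<epsilon> y) \<in> Z" if y: "y \<in> R" for y
    using series_stabilizer_comp_eq[OF Z \<delta> \<epsilon> y] subgroup.m_closed[OF Z(1)] \<delta> \<epsilon> y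
    unfolding series_stabilizer_def by simp
  moreover have "restrict (\<delta> \<circ> \<epsilon>) R z = z" if "z \<in> Z" for z
    using \<delta> \<epsilon> that Z(2) unfolding series_stabilizer_def by auto
  ultimately show "\<delta> \<otimes>\<^bsub>AutF R\<^esub> \<epsilon> \<in> series_stabilizer R Z"
    using mor_comp[OF \<epsilon>F \<delta>F] unfolding series_stabilizer_def by simp
qed

lemma series_stabilizer_conj_closed:
  assumes R: "subgroup R G" and Z: "subgroup Z G" "Z \<subseteq> R"
    and invariant: "\<And>\<eta>. \<eta> \<in> F R R \<Longrightarrow> \<eta> ` Z \<subseteq> Z"
    and \<eta>: "\<eta> \<in> F R R" and \<delta>: "\<delta> \<in> series_stabilizer R Z"
  shows "\<eta> \<otimes>\<^bsub>AutF R\<^esub> \<delta> \<otimes>\<^bsub>AutF R\<^esub> inv\<^bsub>AutF R\<^esub> \<eta> \<in> series_stabilizer R Z"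
proof -
  define \<theta> where "\<theta> = \<eta> \<otimes>\<^bsub>AutF R\<^esub> \<delta> \<otimes>\<^bsub>AutF R\<^esub> inv\<^bsub>AutF R\<^esub> \<eta>"
  define \<eta>' where "\<eta>' = restrict (inv_into R \<eta>) R"
  have \<delta>F: "\<delta> \<in> F R R" using \<delta> unfolding series_stabilizer_def by blast
  have \<eta>'F: "\<eta>' \<in> F R R" unfolding \<eta>'_def by (rule aut_inverse[OF \<eta>])
  have \<eta>\<eta>': "\<eta> (\<eta>' y) = y" if "y \<in> R" for y
    unfolding \<eta>'_def by (rule aut_inverse_apply(2)[OF \<eta> that])
  have \<theta>F: "\<theta> \<in> F R R"
    unfolding \<theta>_def using monoid.m_closed[OF group.is_monoid[OF AutF_group[OF R]]]
      group.inv_closed[OF AutF_group[OF R]] \<eta> \<delta>F by simp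
  have val: "\<theta> y = \<eta> (\<delta> (\<eta>' y))" if y: "y \<in> R" for y
    unfolding \<theta>_def \<eta>'_def using y mor_closed[OF \<eta>'F y] by (simp add: AutF_inv[OF R \<eta>] \<eta>'_def)
  have "\<theta> z = z" if z: "z \<in> Z" for z
  proof -
    have "\<eta>' z \<in> Z" using invariant[OF \<eta>'F] z by blast
    then have "\<delta> (\<eta>' z) = \<eta>' z" using \<delta> unfolding series_stabilizer_def by blast
    then show ?thesis using val \<eta>\<eta>' z Z(2) by auto
  qed
  moreover have "inv y \<otimes> \<theta> y \<in> Z" if y: "y \<in> R" for y
  proof -
    define x where "x = \<eta>' y"
    have x: "x \<in> R" unfolding x_def using mor_closed[OF \<eta>'F y] .
    have xc: "x \<in> carrier G" using x subgroup.mem_carrier[OF R] by blast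
    define w where "w = inv x \<otimes> \<delta> x"
    have w: "w \<in> Z" using \<delta> x unfolding w_def series_stabilizer_def by blast
    have "\<delta> x = x \<otimes> w" unfolding w_def using xc mor_carrier[OF \<delta>F x] by simp
    then have "\<theta> y = y \<otimes> \<eta> w"
      using val[OF y] mor_mult[OF \<eta> x] w Z(2) \<eta>\<eta>'[OF y] unfolding x_def by auto
    moreover have "\<eta> w \<in> Z" using invariant[OF \<eta>] w by blast
    ultimately show ?thesis using y subgroup.mem_carrier[OF R] subgroup.mem_carrier[OF Z(1)] by simp
  qed
  ultimately show ?thesis using \<theta>F unfolding \<theta>_def[symmetric] series_stabilizer_def by blast
qed

lemma normal_series_stabilizer:
  assumes R: "subgroup R G" and Z: "subgroup Z G" "Z \<subseteq> R"
    and invariant: "\<And>\<eta>. \<eta> \<in> F R R \<Longrightarrow> \<eta> ` Z \<subseteq> Z"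
  shows "series_stabilizer R Z \<lhd> AutF R"
  using group.normal_invI[OF AutF_group[OF R] subgroup_series_stabilizer[OF R Z]]
    series_stabilizer_conj_closed[OF R Z invariant] by simp

lemma inj_on_displacement:
  assumes R: "subgroup R G" shows "inj_on (\<lambda>\<delta>. \<lambda>y\<in>R. inv y \<otimes> \<delta> y) (F R V)"
proof (rule inj_onI)
  fix \<delta> \<epsilon> assume \<delta>: "\<delta> \<in> F R V" and \<epsilon>: "\<epsilon> \<in> F R V"
    and eq: "(\<lambda>y\<in>R. inv y \<otimes> \<delta> y) = (\<lambda>y\<in>R. inv y \<otimes> \<epsilon> y)"
  show "\<delta> = \<epsilon>"
  proof (rule extensionalityI[OF mor_extensional[OF \<delta>] mor_extensional[OF \<epsilon>]])
    fix y assume y: "y \<in> R"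
    have "inv y \<otimes> \<delta> y = inv y \<otimes> \<epsilon> y" using fun_cong[OF eq, of y] y by simp
    then show "\<delta> y = \<epsilon> y"
      by (rule l_cancel[OF _ mor_carrier[OF \<delta> y] mor_carrier[OF \<epsilon> y]
          inv_closed[OF subgroup.mem_carrier[OF R y]]])
  qed
qed

text \<open>\<open>\<delta> \<mapsto> (y \<mapsto> y\<inverse> \<delta>(y))\<close> embeds the series stabilizer into the group of maps \<open>R \<rightarrow> Z\<close>.\<close>

lemma card_series_stabilizer_dvd:
  assumes R: "subgroup R G" and Z: "subgroup Z G" "Z \<subseteq> R"
  shows "card (series_stabilizer R Z) dvd card Z ^ card R"
proof -
  define S where "S = series_stabilizer R Z"
  define M where "M = product_group R (\<lambda>_. G\<lparr>carrier := Z\<rparr>)"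
  define d where "d = (\<lambda>\<delta>. \<lambda>y\<in>R. inv y \<otimes> \<delta> y)"
  have "d \<in> hom (AutF R\<lparr>carrier := S\<rparr>) M"
  proof -
    have "d \<delta> \<in> carrier M" if "\<delta> \<in> S" for \<delta>
      using that unfolding S_def series_stabilizer_def M_def d_def by auto
    moreover have "d (restrict (\<delta> \<circ> \<epsilon>) R) = d \<delta> \<otimes>\<^bsub>M\<^esub> d \<epsilon>" if "\<delta> \<in> S" "\<epsilon> \<in> S" for \<delta> \<epsilon>
      using series_stabilizer_comp_eq[OF Z] that unfolding S_def M_def d_def
      by (auto intro!: restrict_ext)
    ultimately show ?thesis unfolding hom_def by auto
  qed
  moreover have M: "group M" unfolding M_def using subgroup_imp_group[OF Z(1)] by simp
  ultimately have "group_hom (AutF R\<lparr>carrier := S\<rparr>) M d"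
    using group.subgroup_imp_group[OF AutF_group[OF R] subgroup_series_stabilizer[OF R Z]]
    unfolding S_def by (simp add: group_hom_def group_hom_axioms_def)
  then have "subgroup (d ` S) M" using group_hom.img_is_subgroup by fastforce
  then have "card (rcosets\<^bsub>M\<^esub> (d ` S)) * card (d ` S) = order M" by (rule group.lagrange[OF M])
  then have "card (d ` S) dvd order M" by (metis dvd_triv_right)
  moreover have "S \<subseteq> F R R" unfolding S_def series_stabilizer_def by blast
  then have "inj_on d S" unfolding d_def by (rule inj_on_subset[OF inj_on_displacement[OF R]])
  moreover have "order M = card Z ^ card R"
    unfolding M_def order_def using card_PiE[OF finite_subgroup[OF R], of "\<lambda>_. Z"] by simp
  ultimately show ?thesis unfolding S_def[symmetric] by (simp add: card_image)
qed

end

section \<open>Normal, central and strongly closed subgroups\<close>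

definition has_normalizing_extension ::
  "('a set \<Rightarrow> 'a set \<Rightarrow> ('a \<Rightarrow> 'a) set) \<Rightarrow> 'a set \<Rightarrow> 'a set \<Rightarrow> ('a \<Rightarrow> 'a) \<Rightarrow> bool" where
  "has_normalizing_extension F Q U \<phi> \<longleftrightarrow>
     (\<exists>A B \<psi>. U \<subseteq> A \<and> Q \<subseteq> A \<and> \<psi> \<in> F A B \<and> (\<forall>x\<in>U. \<psi> x = \<phi> x) \<and> \<psi> ` Q = Q)"

lemma fusion_normal_iff:
  "fusion_normal G F Q \<longleftrightarrow>
     subgroup Q G \<and> (\<forall>U V \<phi>. \<phi> \<in> F U V \<longrightarrow> has_normalizing_extension F Q U \<phi>)"
  unfolding fusion_normal_def has_normalizing_extension_def by blast

definition strongly_closed :: "('a set \<Rightarrow> 'a set \<Rightarrow> ('a \<Rightarrow> 'a) set) \<Rightarrow> 'a set \<Rightarrow> bool" where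
  "strongly_closed F Q \<longleftrightarrow> (\<forall>U V \<phi> x. \<phi> \<in> F U V \<longrightarrow> x \<in> U \<longrightarrow> x \<in> Q \<longrightarrow> \<phi> x \<in> Q)"

lemma has_normalizing_extension_mono:
  assumes "has_normalizing_extension F Q D \<psi>" "U \<subseteq> D" "\<And>x. x \<in> U \<Longrightarrow> \<phi> x = \<psi> x"
  shows "has_normalizing_extension F Q U \<phi>"
proof -
  obtain A B \<chi> where \<chi>: "D \<subseteq> A" "Q \<subseteq> A" "\<chi> \<in> F A B" "\<forall>x\<in>D. \<chi> x = \<psi> x" "\<chi> ` Q = Q"
    using assms(1) unfolding has_normalizing_extension_def by blast
  have "U \<subseteq> A" using \<chi>(1) assms(2) by (rule order_trans[rotated])
  moreover have "\<forall>x\<in>U. \<chi> x = \<phi> x" using \<chi>(4) assms(2,3) by auto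
  ultimately show ?thesis unfolding has_normalizing_extension_def using \<chi>(2,3,5) by blast
qed

lemma has_normalizing_extension_self:
  assumes "\<phi> \<in> F U V" "Q \<subseteq> U" "\<phi> ` Q = Q" shows "has_normalizing_extension F Q U \<phi>"
  unfolding has_normalizing_extension_def using assms by (intro exI[of _ U] exI[of _ V] exI[of _ \<phi>]) simp

context fusion_sys
begin

lemma strongly_closed_image_eq:
  "strongly_closed F Q \<Longrightarrow> \<phi> \<in> F U V \<Longrightarrow> Q \<subseteq> U \<Longrightarrow> \<phi> ` Q = Q"
  by (rule mor_image_eq) (auto simp: strongly_closed_def)

lemma strongly_closed_normal:
  assumes sc: "strongly_closed F Q" and Q: "subgroup Q G" shows "Q \<lhd> G"
proof (rule normal_invI[OF Q])
  fix g q assume g: "g \<in> carrier G" and q: "q \<in> Q"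
  have "conjmap G g ` Q \<subseteq> carrier G" using g subgroup.mem_carrier[OF Q] by auto
  then have "restrict (conjmap G g) Q \<in> F Q (carrier G)" by (rule conj_mor[OF Q subgroup_self g])
  then have "restrict (conjmap G g) Q q \<in> Q" using sc q unfolding strongly_closed_def by blast
  then show "g \<otimes> q \<otimes> inv g \<in> Q" using q unfolding conjmap_def by simp
qed

lemma strongly_closed_subset_of_image:
  assumes sc: "strongly_closed F Q" and \<phi>: "\<phi> \<in> F U V" and Q: "Q \<subseteq> \<phi> ` U"
  shows "Q \<subseteq> U"
proof -
  have "restrict (inv_into U \<phi>) (\<phi> ` U) ` Q = Q"
    by (rule strongly_closed_image_eq[OF sc mor_inverse[OF \<phi>] Q])
  then show ?thesis using mor_image_subset[OF mor_inverse[OF \<phi>]] Q by blast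
qed

lemma fusion_normal_image_eq:
  assumes "fusion_normal G F P" "\<phi> \<in> F U V" "P \<subseteq> U" shows "\<phi> ` P = P"
proof -
  obtain A B \<psi> where "U \<subseteq> A" "\<psi> \<in> F A B" "\<forall>x\<in>U. \<psi> x = \<phi> x" "\<psi> ` P = P"
    using assms(1,2) unfolding fusion_normal_iff has_normalizing_extension_def by blast
  moreover have "\<psi> ` P = \<phi> ` P" by (rule image_cong[OF refl]) (use calculation assms(3) in blast)
  ultimately show ?thesis by simp
qed

lemma fusion_normal_normal:
  assumes P: "fusion_normal G F P" shows "P \<lhd> G"
proof -
  have PG: "subgroup P G" using P unfolding fusion_normal_def by blast
  show ?thesis
  proof (rule normal_invI[OF PG])
    fix g q assume g: "g \<in> carrier G" and q: "q \<in> P"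
    have "conjmap G g ` P \<subseteq> carrier G" using g subgroup.mem_carrier[OF PG] by auto
    then have "restrict (conjmap G g) P \<in> F P (carrier G)" by (rule conj_mor[OF PG subgroup_self g])
    then have "restrict (conjmap G g) P q \<in> P"
      using fusion_normal_image_eq[OF P _ subset_refl] q by blast
    then show "g \<otimes> q \<otimes> inv g \<in> P" using q unfolding conjmap_def by simp
  qed
qed

lemma fusion_center_fixes:
  assumes "P \<subseteq> fusion_center G F" "\<phi> \<in> F U V" "x \<in> P" "x \<in> U"
  shows "\<phi> x = x"
proof -
  obtain Z where Z: "fusion_central G F Z" "x \<in> Z" using assms(1,3) unfolding fusion_center_def by blast
  then obtain A B \<psi> where "\<forall>x\<in>U. \<psi> x = \<phi> x" "\<forall>x\<in>Z. \<psi> x = x"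
    using assms(2) unfolding fusion_central_def by blast
  then have "\<psi> x = \<phi> x" "\<psi> x = x" using Z(2) assms(4) by blast+
  then show ?thesis by simp
qed

lemma normalizing_extension_on_set_mult:
  assumes Q: "Q \<lhd> G" and U: "subgroup U G" and ext: "has_normalizing_extension F Q U \<phi>"
  obtains \<psi> where "\<psi> \<in> F (U <#> Q) (\<phi> ` U <#> Q)" "\<psi> ` (U <#> Q) = \<phi> ` U <#> Q"
    "\<forall>x\<in>U. \<psi> x = \<phi> x" "\<psi> ` Q = Q" "subgroup (\<phi> ` U) G"
proof -
  obtain A B \<chi> where \<chi>: "U \<subseteq> A" "Q \<subseteq> A" "\<chi> \<in> F A B" "\<forall>x\<in>U. \<chi> x = \<phi> x" "\<chi> ` Q = Q"
    using ext unfolding has_normalizing_extension_def by blast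
  have QG: "subgroup Q G" using Q normal_imp_subgroup by blast
  have \<chi>U: "\<chi> ` U = \<phi> ` U" by (rule image_cong[OF refl]) (use \<chi>(4) in blast)
  have "subgroup (\<chi> ` U) G"
    using mor_image_subgroup[OF mor_restrict[OF \<chi>(3) U \<chi>(1) mor_cod_subgroup[OF \<chi>(3)]]]
      \<chi>(1) mor_image_subset[OF \<chi>(3)] by auto
  then have \<phi>U: "subgroup (\<phi> ` U) G" using \<chi>U by simp
  then have V: "subgroup (\<phi> ` U <#> Q) G" using subgroup_set_mult_normal[OF Q] by simp
  have UQ: "U <#> Q \<subseteq> A"
    by (rule set_mult_subset_subgroup[OF mor_dom_subgroup[OF \<chi>(3)] \<chi>(1,2)])
  have img: "\<chi> ` (U <#> Q) = \<phi> ` U <#> Q"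
    using mor_image_set_mult[OF \<chi>(3) \<chi>(1,2)] \<chi>U \<chi>(5) by simp
  show ?thesis
  proof
    show "restrict \<chi> (U <#> Q) \<in> F (U <#> Q) (\<phi> ` U <#> Q)"
      using mor_restrict[OF \<chi>(3) subgroup_set_mult_normal[OF Q U] UQ V] img by simp
    show "restrict \<chi> (U <#> Q) ` (U <#> Q) = \<phi> ` U <#> Q" using img by simp
    show "\<forall>x\<in>U. restrict \<chi> (U <#> Q) x = \<phi> x" using \<chi>(4) subset_set_mult_left[OF U QG] by auto
    show "restrict \<chi> (U <#> Q) ` Q = Q"
      unfolding restrict_image_subset[OF subset_set_mult_right[OF U QG]] by (rule \<chi>(5))
  qed (rule \<phi>U)
qed

lemma has_normalizing_extension_comp:
  assumes Q: "Q \<lhd> G" and U: "subgroup U G" and \<phi>U: "\<phi> ` U \<subseteq> V"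
    and ext\<phi>: "has_normalizing_extension F Q U \<phi>" and ext\<chi>: "has_normalizing_extension F Q V \<chi>"
  shows "has_normalizing_extension F Q U (\<chi> \<circ> \<phi>)"
proof -
  have QG: "subgroup Q G" using Q normal_imp_subgroup by blast
  obtain \<psi> where \<psi>: "\<psi> \<in> F (U <#> Q) (\<phi> ` U <#> Q)" "\<forall>x\<in>U. \<psi> x = \<phi> x" "\<psi> ` Q = Q"
    and \<phi>U_sub: "subgroup (\<phi> ` U) G"
    using normalizing_extension_on_set_mult[OF Q U ext\<phi>] by metis
  obtain A B \<psi>' where \<psi>': "V \<subseteq> A" "Q \<subseteq> A" "\<psi>' \<in> F A B" "\<forall>x\<in>V. \<psi>' x = \<chi> x" "\<psi>' ` Q = Q"
    using ext\<chi> unfolding has_normalizing_extension_def by blast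
  have "\<phi> ` U <#> Q \<subseteq> A"
    using set_mult_subset_subgroup[OF mor_dom_subgroup[OF \<psi>'(3)] _ \<psi>'(2)] \<phi>U \<psi>'(1) by blast
  then have "restrict \<psi>' (\<phi> ` U <#> Q) \<in> F (\<phi> ` U <#> Q) B"
    using mor_restrict[OF \<psi>'(3) mor_cod_subgroup[OF \<psi>(1)] _ mor_cod_subgroup[OF \<psi>'(3)]]
      mor_image_subset[OF \<psi>'(3)] by (meson image_mono order_trans)
  then have comp: "restrict (restrict \<psi>' (\<phi> ` U <#> Q) \<circ> \<psi>) (U <#> Q) \<in> F (U <#> Q) B"
    by (rule mor_comp[OF \<psi>(1)])
  have UUQ: "U \<subseteq> U <#> Q" and QUQ: "Q \<subseteq> U <#> Q" using subset_set_mult[OF U QG] by auto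
  have \<phi>UQ: "\<phi> ` U \<subseteq> \<phi> ` U <#> Q" and Q\<phi>UQ: "Q \<subseteq> \<phi> ` U <#> Q"
    using subset_set_mult[OF \<phi>U_sub QG] by auto
  have "\<forall>x\<in>U. restrict (restrict \<psi>' (\<phi> ` U <#> Q) \<circ> \<psi>) (U <#> Q) x = (\<chi> \<circ> \<phi>) x"
    using \<psi>(2) \<psi>'(4) \<phi>U UUQ \<phi>UQ by auto
  moreover have "restrict (restrict \<psi>' (\<phi> ` U <#> Q) \<circ> \<psi>) (U <#> Q) ` Q = Q"
    unfolding restrict_image_subset[OF QUQ] image_comp[symmetric] \<psi>(3)
      restrict_image_subset[OF Q\<phi>UQ] by (rule \<psi>'(5))
  ultimately show ?thesis unfolding has_normalizing_extension_def using comp UUQ QUQ by blast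
qed

lemma has_normalizing_extension_inv:
  assumes Q: "Q \<lhd> G" and U: "subgroup U G" and inj: "inj_on \<phi> U"
    and ext: "has_normalizing_extension F Q U \<phi>"
  shows "has_normalizing_extension F Q (\<phi> ` U) (inv_into U \<phi>)"
proof -
  have QG: "subgroup Q G" using Q normal_imp_subgroup by blast
  obtain \<psi> where \<psi>: "\<psi> \<in> F (U <#> Q) (\<phi> ` U <#> Q)" "\<psi> ` (U <#> Q) = \<phi> ` U <#> Q"
    "\<forall>x\<in>U. \<psi> x = \<phi> x" "\<psi> ` Q = Q" and \<phi>U: "subgroup (\<phi> ` U) G"
    using normalizing_extension_on_set_mult[OF Q U ext] by metis
  define \<psi>' where "\<psi>' = restrict (inv_into (U <#> Q) \<psi>) (\<psi> ` (U <#> Q))"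
  have \<psi>'F: "\<psi>' \<in> F (\<psi> ` (U <#> Q)) (U <#> Q)" unfolding \<psi>'_def by (rule mor_inverse[OF \<psi>(1)])
  have UUQ: "U \<subseteq> U <#> Q" and QUQ: "Q \<subseteq> U <#> Q" using subset_set_mult[OF U QG] by auto
  have "\<phi> ` U \<subseteq> \<psi> ` (U <#> Q)" and "Q \<subseteq> \<psi> ` (U <#> Q)"
    using subset_set_mult[OF \<phi>U QG] \<psi>(2) by auto
  moreover have "\<psi>' y = inv_into U \<phi> y" if "y \<in> \<phi> ` U" for y
  proof -
    obtain x where x: "x \<in> U" "y = \<phi> x" using \<open>y \<in> \<phi> ` U\<close> by blast
    have "\<psi>' (\<psi> x) = x" unfolding \<psi>'_def using inverse_mor_apply[OF \<psi>(1)] UUQ x(1) by blast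
    then have "\<psi>' y = x" using \<psi>(3) x by simp
    then show ?thesis using x inv_into_f_f[OF inj] by simp
  qed
  moreover have "\<psi>' ` Q = Q"
    unfolding \<psi>'_def restrict_image_subset[OF \<open>Q \<subseteq> \<psi> ` (U <#> Q)\<close>]
    using inv_into_image_cancel[OF mor_inj_on[OF \<psi>(1)] QUQ] \<psi>(4) by simp
  ultimately show ?thesis unfolding has_normalizing_extension_def using \<psi>'F by blast
qed

lemma has_normalizing_extension_of_factorization:
  assumes Q: "Q \<lhd> G" and \<phi>: "\<phi> \<in> F U V" and \<alpha>: "\<alpha> \<in> F U W" "\<alpha> ` U = W"
    and \<beta>: "\<beta> \<in> F (\<phi> ` U) W"
    and ext\<alpha>: "has_normalizing_extension F Q U \<alpha>"
    and ext\<beta>: "has_normalizing_extension F Q (\<phi> ` U) \<beta>"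
    and ext\<gamma>: "has_normalizing_extension F Q W (\<beta> \<circ> \<phi> \<circ> inv_into U \<alpha>)"
  shows "has_normalizing_extension F Q U \<phi>"
proof -
  have U: "subgroup U G" by (rule mor_dom_subgroup[OF \<phi>])
  have "has_normalizing_extension F Q U ((\<beta> \<circ> \<phi> \<circ> inv_into U \<alpha>) \<circ> \<alpha>)"
    using has_normalizing_extension_comp[OF Q U _ ext\<alpha> ext\<gamma>] \<alpha>(2) by simp
  moreover have "((\<beta> \<circ> \<phi> \<circ> inv_into U \<alpha>) \<circ> \<alpha>) ` U \<subseteq> \<beta> ` \<phi> ` U"
    using inv_into_f_f[OF mor_inj_on[OF \<alpha>(1)]] by auto
  ultimately have ext: "has_normalizing_extension F Q U (inv_into (\<phi> ` U) \<beta> \<circ> ((\<beta> \<circ> \<phi> \<circ> inv_into U \<alpha>) \<circ> \<alpha>))"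
    using has_normalizing_extension_comp[OF Q U _ _ has_normalizing_extension_inv[OF Q
          mor_image_subgroup[OF \<phi>] mor_inj_on[OF \<beta>] ext\<beta>]] by blast
  have "\<phi> x = (inv_into (\<phi> ` U) \<beta> \<circ> ((\<beta> \<circ> \<phi> \<circ> inv_into U \<alpha>) \<circ> \<alpha>)) x" if "x \<in> U" for x
    using that inv_into_f_f[OF mor_inj_on[OF \<alpha>(1)]] inv_into_f_f[OF mor_inj_on[OF \<beta>]] by simp
  then show ?thesis by (rule has_normalizing_extension_mono[OF ext subset_refl])
qed

end

section \<open>Saturated fusion systems\<close>

locale saturated_fusion_sys = p_group G p for G (structure) and p +
  fixes F :: "'a set \<Rightarrow> 'a set \<Rightarrow> ('a \<Rightarrow> 'a) set"
  assumes saturated: "saturated_fusion_system p G F"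

sublocale saturated_fusion_sys \<subseteq> fusion_sys
  using saturated finite_carrier unfolding saturated_fusion_system_def by unfold_locales auto

context saturated_fusion_sys
begin

lemma fully_normalized_imp_centralized:
  "subgroup R G \<Longrightarrow> fully_normalized G F R \<Longrightarrow> fully_centralized G F R"
  using saturated unfolding saturated_fusion_system_def by blast

lemma sylow_index:
  "subgroup R G \<Longrightarrow> fully_normalized G F R \<Longrightarrow>
     \<exists>m. card (F R R) = card (HomS G R R) * m \<and> \<not> p dvd m"
  using saturated unfolding saturated_fusion_system_def by blast

lemma extension_axiom:
  assumes "subgroup R G" "\<phi> \<in> F R (carrier G)" "fully_centralized G F (\<phi> ` R)"
  shows "\<exists>\<psi>\<in>F (N_phi G R \<phi>) (carrier G). \<forall>x\<in>R. \<psi> x = \<phi> x"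
  using saturated assms unfolding saturated_fusion_system_def by blast

lemma p_subgroup_conj_into_HomS:
  assumes R: "subgroup R G" and fn: "fully_normalized G F R"
    and H: "group H" "order H = p ^ k" and \<psi>: "\<psi> \<in> hom H (AutF R)"
  shows "\<exists>\<eta>\<in>F R R. \<forall>h\<in>carrier H. \<eta> \<otimes>\<^bsub>AutF R\<^esub> \<psi> h \<otimes>\<^bsub>AutF R\<^esub> inv\<^bsub>AutF R\<^esub> \<eta> \<in> HomS G R R"
proof -
  obtain m where m: "card (F R R) = card (HomS G R R) * m" "\<not> p dvd m"
    using sylow_index[OF R fn] by blast
  then have "\<not> p dvd card (rcosets\<^bsub>AutF R\<^esub> (HomS G R R))"
    using card_rcosets_HomS[OF R m(1)] by simp
  then show ?thesis
    using group.p_subgroup_conjugate_into[OF AutF_group[OF R] _ subgroup_HomS_AutF[OF R] _ prime_p H \<psi>]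
      finite_mor[OF R] by simp
qed

lemma normal_p_subgroup_subset_HomS:
  assumes R: "subgroup R G" and fn: "fully_normalized G F R"
    and K: "K \<lhd> AutF R" and card: "card K = p ^ k"
  shows "K \<subseteq> HomS G R R"
proof
  fix \<delta> assume \<delta>: "\<delta> \<in> K"
  interpret A: group "AutF R" by (rule AutF_group[OF R])
  have Ksub: "subgroup K (AutF R)" using K normal_imp_subgroup by blast
  have incl: "(\<lambda>x. x) \<in> hom ((AutF R)\<lparr>carrier := K\<rparr>) (AutF R)"
    using subgroup.subset[OF Ksub] unfolding hom_def by auto
  have ord: "order ((AutF R)\<lparr>carrier := K\<rparr>) = p ^ k" using card unfolding order_def by simp
  obtain \<eta> where \<eta>: "\<eta> \<in> F R R"
    and conj: "\<And>\<kappa>. \<kappa> \<in> K \<Longrightarrow> \<eta> \<otimes>\<^bsub>AutF R\<^esub> \<kappa> \<otimes>\<^bsub>AutF R\<^esub> inv\<^bsub>AutF R\<^esub> \<eta> \<in> HomS G R R"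
    using p_subgroup_conj_into_HomS[OF R fn A.subgroup_imp_group[OF Ksub] ord incl] by auto
  have "inv\<^bsub>AutF R\<^esub> \<eta> \<otimes>\<^bsub>AutF R\<^esub> \<delta> \<otimes>\<^bsub>AutF R\<^esub> inv\<^bsub>AutF R\<^esub> (inv\<^bsub>AutF R\<^esub> \<eta>) \<in> K"
    using A.normal_invE(2)[OF K A.inv_closed \<delta>] \<eta> by simp
  moreover have "\<eta> \<otimes>\<^bsub>AutF R\<^esub> (inv\<^bsub>AutF R\<^esub> \<eta> \<otimes>\<^bsub>AutF R\<^esub> \<delta> \<otimes>\<^bsub>AutF R\<^esub> inv\<^bsub>AutF R\<^esub> (inv\<^bsub>AutF R\<^esub> \<eta>))
      \<otimes>\<^bsub>AutF R\<^esub> inv\<^bsub>AutF R\<^esub> \<eta> = \<delta>"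
  proof -
    have "\<eta> \<in> carrier (AutF R)" "\<delta> \<in> carrier (AutF R)"
      using \<eta> subgroup.mem_carrier[OF Ksub \<delta>] by simp_all
    then show ?thesis by (simp add: A.m_assoc del: AutF_mult AutF_one AutF_carrier)
  qed
  ultimately show "\<delta> \<in> HomS G R R" using conj by metis
qed

lemma card_series_stabilizer:
  assumes R: "subgroup R G" and Z: "subgroup Z G" "Z \<subseteq> R"
  shows "\<exists>j. card (series_stabilizer R Z) = p ^ j"
proof -
  obtain b where "card Z = p ^ b" using card_subgroup_prime_power[OF Z(1)] by blast
  then have "card (series_stabilizer R Z) dvd p ^ (b * card R)"
    using card_series_stabilizer_dvd[OF R Z] by (simp add: power_mult)
  then show ?thesis using divides_primepow_nat[OF prime_p] by blast
qed

lemma series_stabilizer_subset_HomS: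
  assumes R: "subgroup R G" and fn: "fully_normalized G F R" and Z: "subgroup Z G" "Z \<subseteq> R"
    and invariant: "\<And>\<eta>. \<eta> \<in> F R R \<Longrightarrow> \<eta> ` Z \<subseteq> Z"
  shows "series_stabilizer R Z \<subseteq> HomS G R R"
  using normal_p_subgroup_subset_HomS[OF R fn normal_series_stabilizer[OF R Z invariant]]
    card_series_stabilizer[OF R Z] by blast

lemma fully_normalized_conjugate_exists:
  assumes U: "subgroup U G"
  shows "\<exists>\<beta>\<in>F U (carrier G). fully_normalized G F (\<beta> ` U)"
proof -
  define C where "C = {\<beta> ` U | \<beta>. \<beta> \<in> F U (carrier G)}"
  define M where "M = Max ((\<lambda>W. card (normalizerS G W)) ` C)"
  have "C \<subseteq> Pow (carrier G)" unfolding C_def using mor_carrier by auto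
  then have finC: "finite C" by (rule finite_subset) (simp add: finite_carrier)
  have "restrict (\<lambda>x. x) U \<in> F U (carrier G)"
    by (rule restrict_id_mor[OF U subgroup_self subgroup.subset[OF U]])
  then have "C \<noteq> {}" unfolding C_def by blast
  then have "M \<in> (\<lambda>W. card (normalizerS G W)) ` C"
    unfolding M_def by (intro Max_in finite_imageI finC) simp
  then obtain V where V: "V \<in> C" "card (normalizerS G V) = M" by blast
  obtain \<beta> where \<beta>: "\<beta> \<in> F U (carrier G)" "V = \<beta> ` U" using V(1) unfolding C_def by blast
  have max: "card (normalizerS G (\<chi> ` V)) \<le> card (normalizerS G V)" if \<chi>: "\<chi> \<in> F V (carrier G)" for \<chi>
  proof -
    have "restrict (\<chi> \<circ> \<beta>) U \<in> F U (carrier G)"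
      using mor_comp[OF mor_onto_image[OF \<beta>(1)] \<chi>[unfolded \<beta>(2)]] .
    moreover have "\<chi> ` V = restrict (\<chi> \<circ> \<beta>) U ` U" unfolding \<beta>(2) by (simp add: image_comp)
    ultimately have "\<chi> ` V \<in> C" unfolding C_def by blast
    then have "card (normalizerS G (\<chi> ` V)) \<le> M"
      unfolding M_def by (rule Max_ge[OF finite_imageI[OF finC] imageI])
    then show ?thesis using V(2) by simp
  qed
  have "fully_normalized G F V" unfolding fully_normalized_def by (intro ballI max)
  then show ?thesis using \<beta> by blast
qed

text \<open>The standard consequence of the Sylow axiom: conjugating \<open>\<beta> c\<^sub>g \<beta>\<inverse>\<close> for
  \<open>g \<in> N\<^sub>S(R)\<close> into \<open>Aut\<^sub>S(\<beta> R)\<close> by a single automorphism \<open>\<eta>\<close> makes \<open>\<eta> \<beta>\<close> extend to \<open>N\<^sub>S(R)\<close>.\<close>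

lemma extension_to_normalizer:
  assumes fn: "fully_normalized G F (\<beta> ` R)" and \<beta>: "\<beta> \<in> F R (carrier G)"
  shows "\<exists>\<alpha>\<in>F (normalizerS G R) (carrier G). \<alpha> ` R = \<beta> ` R"
proof -
  define Xs where "Xs = \<beta> ` R"
  have R: "subgroup R G" by (rule mor_dom_subgroup[OF \<beta>])
  have Xs: "subgroup Xs G" unfolding Xs_def by (rule mor_image_subgroup[OF \<beta>])
  have N: "subgroup (normalizerS G R) G" by (rule subgroup_normalizerS[OF subgroup.subset[OF R]])
  obtain k where ordN: "order (G\<lparr>carrier := normalizerS G R\<rparr>) = p ^ k"
    using card_subgroup_prime_power[OF N] unfolding order_def by auto
  obtain \<eta> where \<eta>: "\<eta> \<in> F Xs Xs" and
    conj: "\<And>g. g \<in> normalizerS G R \<Longrightarrow>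
       \<eta> \<otimes>\<^bsub>AutF Xs\<^esub> conj_transport R \<beta> g \<otimes>\<^bsub>AutF Xs\<^esub> inv\<^bsub>AutF Xs\<^esub> \<eta> \<in> HomS G Xs Xs"
    using p_subgroup_conj_into_HomS[OF Xs fn[folded Xs_def] subgroup_imp_group[OF N] ordN
        conj_transport_hom[OF \<beta>, folded Xs_def]] by auto
  define \<alpha>0 where "\<alpha>0 = restrict (\<eta> \<circ> \<beta>) R"
  have \<alpha>0: "\<alpha>0 \<in> F R (carrier G)"
    unfolding \<alpha>0_def by (rule mor_to_carrier[OF mor_comp[OF mor_onto_image[OF \<beta>] \<eta>[unfolded Xs_def]]])
  have \<alpha>0R: "\<alpha>0 ` R = Xs"
    unfolding \<alpha>0_def Xs_def using aut_image_eq[OF \<eta>[unfolded Xs_def]] by (auto simp: image_comp[symmetric])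
  have "normalizerS G R \<subseteq> N_phi G R \<alpha>0"
  proof
    fix g assume g: "g \<in> normalizerS G R"
    show "g \<in> N_phi G R \<alpha>0"
      using mem_N_phi_of_conj_transport[OF \<alpha>0 g] conj[OF g] \<alpha>0R
        conj_transport_comp[OF \<beta> \<eta>[unfolded Xs_def] g] unfolding \<alpha>0_def Xs_def by simp
  qed
  then have "N_phi G R \<alpha>0 = normalizerS G R" unfolding N_phi_def by blast
  moreover obtain \<alpha> where "\<alpha> \<in> F (N_phi G R \<alpha>0) (carrier G)" and \<alpha>: "\<forall>x\<in>R. \<alpha> x = \<alpha>0 x"
    using extension_axiom[OF R \<alpha>0] fully_normalized_imp_centralized[OF Xs fn[folded Xs_def]] \<alpha>0R
    by auto
  moreover have "\<alpha> ` R = \<alpha>0 ` R" by (rule image_cong[OF refl]) (use \<alpha> in blast)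
  ultimately show ?thesis using \<alpha>0R unfolding Xs_def by metis
qed

lemma common_fully_normalized_conjugate:
  assumes \<phi>: "\<phi> \<in> F U (carrier G)"
  obtains Xs \<alpha> \<beta> where "fully_normalized G F Xs"
    "\<alpha> \<in> F (normalizerS G U) (carrier G)" "\<alpha> ` U = Xs"
    "\<beta> \<in> F (normalizerS G (\<phi> ` U)) (carrier G)" "\<beta> ` \<phi> ` U = Xs"
proof -
  have U: "subgroup U G" by (rule mor_dom_subgroup[OF \<phi>])
  obtain \<beta>0 where \<beta>0: "\<beta>0 \<in> F U (carrier G)" and fn: "fully_normalized G F (\<beta>0 ` U)"
    using fully_normalized_conjugate_exists[OF U] by blast
  obtain \<alpha> where "\<alpha> \<in> F (normalizerS G U) (carrier G)" "\<alpha> ` U = \<beta>0 ` U"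
    using extension_to_normalizer[OF fn \<beta>0] by blast
  moreover
  define \<beta>1 where "\<beta>1 = restrict (\<beta>0 \<circ> restrict (inv_into U \<phi>) (\<phi> ` U)) (\<phi> ` U)"
  have \<beta>1: "\<beta>1 \<in> F (\<phi> ` U) (carrier G)" unfolding \<beta>1_def by (rule mor_comp[OF mor_inverse[OF \<phi>] \<beta>0])
  have "\<beta>1 (\<phi> x) = \<beta>0 x" if "x \<in> U" for x
    unfolding \<beta>1_def using inverse_mor_apply[OF \<phi> that] that by simp
  then have \<beta>1_img: "\<beta>1 ` \<phi> ` U = \<beta>0 ` U" unfolding image_image by (rule image_cong[OF refl])
  then have "fully_normalized G F (\<beta>1 ` \<phi> ` U)" using fn by (simp only:)
  then obtain \<beta> where "\<beta> \<in> F (normalizerS G (\<phi> ` U)) (carrier G)" "\<beta> ` \<phi> ` U = \<beta>1 ` \<phi> ` U"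
    using extension_to_normalizer[OF _ \<beta>1] by blast
  ultimately show ?thesis using that[OF fn] \<beta>1_img by simp
qed

end

section \<open>A criterion for normality\<close>

locale normal_criterion = saturated_fusion_sys +
  fixes P Q :: "'a set"
  assumes P_normal: "fusion_normal G F P"
    and Q_subgroup: "subgroup Q G"
    and Q_strongly_closed: "strongly_closed F Q"
    and Q_N_phi: "\<And>R \<gamma>. subgroup R G \<Longrightarrow> fully_normalized G F R \<Longrightarrow> P \<subseteq> R \<Longrightarrow> \<gamma> \<in> F R R \<Longrightarrow>
                     Q \<inter> normalizerS G R \<subseteq> N_phi G R \<gamma>"
begin

lemma Q_normal: "Q \<lhd> G"
  by (rule strongly_closed_normal[OF Q_strongly_closed Q_subgroup])

lemma mor_image_contains_P_avoids_Q:
  assumes \<theta>: "\<theta> \<in> F U V" and "P \<subseteq> U" "\<not> Q \<subseteq> U"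
  shows "subgroup (\<theta> ` U) G" "P \<subseteq> \<theta> ` U" "\<not> Q \<subseteq> \<theta> ` U" "card (\<theta> ` U) = card U"
proof -
  show "subgroup (\<theta> ` U) G" by (rule mor_image_subgroup[OF \<theta>])
  show "P \<subseteq> \<theta> ` U"
    using fusion_normal_image_eq[OF P_normal \<theta> assms(2)] assms(2) by (metis image_mono)
  show "\<not> Q \<subseteq> \<theta> ` U"
    using strongly_closed_subset_of_image[OF Q_strongly_closed \<theta>] assms(3) by blast
  show "card (\<theta> ` U) = card U" by (rule card_mor_image[OF \<theta> subset_refl])
qed

lemma normalizer_set_mult_subset_N_phi:
  assumes R: "subgroup R G" "fully_normalized G F R" "P \<subseteq> R" and \<gamma>: "\<gamma> \<in> F R R"
  shows "normalizerS G R \<inter> (R <#> Q) \<subseteq> N_phi G R \<gamma>"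
proof
  fix y assume y: "y \<in> normalizerS G R \<inter> (R <#> Q)"
  then obtain x q where x: "x \<in> R" and q: "q \<in> Q" and yxq: "y = x \<otimes> q"
    unfolding set_mult_def by blast
  have N: "subgroup (normalizerS G R) G" by (rule subgroup_normalizerS[OF subgroup.subset[OF R(1)]])
  have xN: "x \<in> normalizerS G R" using subgroup_subset_normalizerS[OF R(1)] x by blast
  have xc: "x \<in> carrier G" and qc: "q \<in> carrier G"
    using subgroup.mem_carrier[OF R(1) x] subgroup.mem_carrier[OF Q_subgroup q] by auto
  have "inv x \<otimes> y \<in> normalizerS G R"
    using subgroup.m_closed[OF N subgroup.m_inv_closed[OF N xN]] y by blast
  then have "q \<in> Q \<inter> normalizerS G R" using yxq xc qc q by (simp add: m_assoc[symmetric])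
  then have "q \<in> N_phi G R \<gamma>" using Q_N_phi[OF R \<gamma>] by blast
  moreover have "x \<in> N_phi G R \<gamma>" using subgroup_subset_N_phi[OF \<gamma>] x by blast
  ultimately show "y \<in> N_phi G R \<gamma>" using subgroup.m_closed[OF subgroup_N_phi[OF \<gamma>]] yxq by blast
qed

text \<open>Since Q is not contained in U, \<open>N\<^bsub>UQ\<^esub>(U)\<close> is strictly larger than U, so the induction
  hypothesis applies to it.\<close>

lemma normalizing_extension_of_normalizer:
  assumes IH: "\<forall>U' \<phi>'. card U < card U' \<longrightarrow> P \<subseteq> U' \<longrightarrow> \<phi>' \<in> F U' (carrier G) \<longrightarrow>
                 has_normalizing_extension F Q U' \<phi>'"
    and U: "subgroup U G" "P \<subseteq> U" "\<not> Q \<subseteq> U"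
    and \<alpha>: "\<alpha> \<in> F D (carrier G)" "normalizerS G U \<inter> (U <#> Q) \<subseteq> D"
  shows "has_normalizing_extension F Q U \<alpha>"
proof -
  define Y where "Y = normalizerS G U \<inter> (U <#> Q)"
  have UQ: "subgroup (U <#> Q) G" by (rule subgroup_set_mult_normal[OF Q_normal U(1)])
  have Y: "subgroup Y G"
    unfolding Y_def by (rule subgroups_Inter_pair[OF subgroup_normalizerS[OF subgroup.subset[OF U(1)]] UQ])
  have UY: "U \<subseteq> Y"
    unfolding Y_def using subgroup_subset_normalizerS[OF U(1)] subset_set_mult_left[OF U(1) Q_subgroup]
    by blast
  have "U \<subset> U <#> Q" using U(3) subset_set_mult[OF U(1) Q_subgroup] by blast
  then obtain a where "a \<in> (U <#> Q) - U" "conjmap G a ` U = U"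
    using normalizer_grows[OF U(1) UQ] by blast
  then have "a \<in> Y - U" unfolding Y_def normalizerS_def using subgroup.mem_carrier[OF UQ] by blast
  then have "card U < card Y" using UY by (intro psubset_card_mono[OF finite_subgroup[OF Y]]) blast
  moreover have "restrict \<alpha> Y \<in> F Y (carrier G)"
    using mor_restrict[OF \<alpha>(1) Y \<alpha>(2)[folded Y_def] subgroup_self] mor_carrier[OF \<alpha>(1)] \<alpha>(2)
    unfolding Y_def by blast
  ultimately have "has_normalizing_extension F Q Y (restrict \<alpha> Y)" using IH U(2) UY by auto
  then show ?thesis by (rule has_normalizing_extension_mono[OF _ UY]) (use UY in auto)
qed

lemma normalizing_extension_of_aut:
  assumes IH: "\<forall>U' \<phi>'. card R < card U' \<longrightarrow> P \<subseteq> U' \<longrightarrow> \<phi>' \<in> F U' (carrier G) \<longrightarrow>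
                 has_normalizing_extension F Q U' \<phi>'"
    and R: "subgroup R G" "fully_normalized G F R" "P \<subseteq> R" "\<not> Q \<subseteq> R" and \<gamma>: "\<gamma> \<in> F R R"
  shows "has_normalizing_extension F Q R \<gamma>"
proof -
  obtain \<gamma>' where \<gamma>': "\<gamma>' \<in> F (N_phi G R \<gamma>) (carrier G)" "\<forall>y\<in>R. \<gamma>' y = \<gamma> y"
    using extension_axiom[OF R(1) mor_to_carrier[OF \<gamma>]]
      fully_normalized_imp_centralized[OF R(1,2)] aut_image_eq[OF \<gamma>] by auto
  have "has_normalizing_extension F Q R \<gamma>'"
    by (rule normalizing_extension_of_normalizer[OF IH R(1,3,4) \<gamma>'(1)
          normalizer_set_mult_subset_N_phi[OF R(1-3) \<gamma>]])
  then show ?thesis by (rule has_normalizing_extension_mono[OF _ subset_refl]) (simp add: \<gamma>'(2))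
qed

text \<open>Write \<open>\<phi> = \<beta>\<inverse> \<gamma> \<alpha>\<close> through a fully normalized conjugate \<open>X\<^sup>*\<close> of U, where \<open>\<alpha>\<close> and \<open>\<beta>\<close> are
  defined on the normalizers of U and \<open>\<phi>(U)\<close> and \<open>\<gamma>\<close> extends to \<open>N\<^sub>\<gamma> \<supseteq> N\<^bsub>X\<^sup>*Q\<^esub>(X\<^sup>*)\<close>; all three
  domains are larger than U.\<close>

lemma normalizing_extension_step:
  assumes IH: "\<forall>U' \<phi>'. card U < card U' \<longrightarrow> P \<subseteq> U' \<longrightarrow> \<phi>' \<in> F U' (carrier G) \<longrightarrow>
                 has_normalizing_extension F Q U' \<phi>'"
    and \<phi>: "\<phi> \<in> F U (carrier G)" and PU: "P \<subseteq> U"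
  shows "has_normalizing_extension F Q U \<phi>"
proof (cases "Q \<subseteq> U")
  case True
  show ?thesis
    using has_normalizing_extension_self[where F = F, OF \<phi> True
        strongly_closed_image_eq[OF Q_strongly_closed \<phi> True]] .
next
  case False
  have U: "subgroup U G" by (rule mor_dom_subgroup[OF \<phi>])
  obtain Xs \<alpha> \<beta> where fn: "fully_normalized G F Xs"
    and \<alpha>: "\<alpha> \<in> F (normalizerS G U) (carrier G)" "\<alpha> ` U = Xs"
    and \<beta>: "\<beta> \<in> F (normalizerS G (\<phi> ` U)) (carrier G)" "\<beta> ` \<phi> ` U = Xs"
    by (rule common_fully_normalized_conjugate[OF \<phi>])
  define \<alpha>U where "\<alpha>U = restrict \<alpha> U"
  define \<beta>U where "\<beta>U = restrict \<beta> (\<phi> ` U)"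
  note \<phi>U = mor_image_contains_P_avoids_Q[OF \<phi> PU False]
  have \<alpha>U: "\<alpha>U \<in> F U Xs" "\<alpha>U ` U = Xs"
    using mor_restrict_onto[OF \<alpha>(1) U subgroup_subset_normalizerS[OF U]] \<alpha>(2) unfolding \<alpha>U_def by auto
  have \<beta>U: "\<beta>U \<in> F (\<phi> ` U) Xs"
    using mor_restrict_onto[OF \<beta>(1) \<phi>U(1) subgroup_subset_normalizerS[OF \<phi>U(1)]] \<beta>(2)
    unfolding \<beta>U_def by auto
  note Xs = mor_image_contains_P_avoids_Q[OF \<alpha>U(1) PU False, unfolded \<alpha>U(2)]
  define \<gamma> where "\<gamma> = restrict (\<beta>U \<circ> restrict (\<phi> \<circ> restrict (inv_into U \<alpha>U) Xs) Xs) Xs"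
  have \<gamma>: "\<gamma> \<in> F Xs Xs"
    using mor_comp[OF mor_comp[OF mor_inverse[OF \<alpha>U(1)] mor_onto_image[OF \<phi>]] \<beta>U]
    unfolding \<gamma>_def \<alpha>U(2) .
  have "has_normalizing_extension F Q U \<alpha>U"
    using normalizing_extension_of_normalizer[OF IH U PU False \<alpha>(1) Int_lower1]
    by (rule has_normalizing_extension_mono[OF _ subset_refl]) (simp add: \<alpha>U_def)
  moreover have "has_normalizing_extension F Q (\<phi> ` U) \<beta>U"
    using normalizing_extension_of_normalizer[OF IH[folded \<phi>U(4)] \<phi>U(1-3) \<beta>(1) Int_lower1]
    by (rule has_normalizing_extension_mono[OF _ subset_refl]) (simp add: \<beta>U_def)
  moreover have "has_normalizing_extension F Q Xs (\<beta>U \<circ> \<phi> \<circ> inv_into U \<alpha>U)"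
    using normalizing_extension_of_aut[OF IH[folded Xs(4)] Xs(1) fn Xs(2,3) \<gamma>]
    by (rule has_normalizing_extension_mono[OF _ subset_refl]) (simp add: \<gamma>_def)
  ultimately show ?thesis
    by (rule has_normalizing_extension_of_factorization[OF Q_normal \<phi> \<alpha>U \<beta>U])
qed

lemma normalizing_extension_above_P:
  "P \<subseteq> U \<Longrightarrow> \<phi> \<in> F U (carrier G) \<Longrightarrow> has_normalizing_extension F Q U \<phi>"
proof (induction "card (carrier G) - card U" arbitrary: U \<phi> rule: less_induct)
  case less
  have "\<forall>U' \<phi>'. card U < card U' \<longrightarrow> P \<subseteq> U' \<longrightarrow> \<phi>' \<in> F U' (carrier G) \<longrightarrow>
          has_normalizing_extension F Q U' \<phi>'"
  proof (intro allI impI)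
    fix U' \<phi>' assume "card U < card U'" "P \<subseteq> U'" "\<phi>' \<in> F U' (carrier G)"
    moreover have "card U' \<le> card (carrier G)"
      using card_mono[OF finite_carrier subgroup.subset[OF mor_dom_subgroup]] calculation(3) by blast
    ultimately show "has_normalizing_extension F Q U' \<phi>'" using less.hyps by simp
  qed
  then show ?case by (rule normalizing_extension_step[OF _ less.prems(2,1)])
qed

theorem fusion_normal: "fusion_normal G F Q"
  unfolding fusion_normal_iff
proof (intro conjI allI impI Q_subgroup)
  fix U V \<phi> assume "\<phi> \<in> F U V"
  then obtain A B \<psi> where \<psi>: "U \<subseteq> A" "P \<subseteq> A" "\<psi> \<in> F A B" "\<forall>x\<in>U. \<psi> x = \<phi> x"
    using P_normal unfolding fusion_normal_iff has_normalizing_extension_def by blast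
  have "has_normalizing_extension F Q A \<psi>"
    by (rule normalizing_extension_above_P[OF \<psi>(2) mor_to_carrier[OF \<psi>(3)]])
  then show "has_normalizing_extension F Q U \<phi>"
    by (rule has_normalizing_extension_mono[OF _ \<psi>(1)]) (use \<psi>(4) in simp)
qed

end

section \<open>Normality via the quotient by P\<close>

context fusion_sys
begin

lemma mor_rcos_cong:
  assumes \<phi>: "\<phi> \<in> F U V" and P: "subgroup P G" "P \<subseteq> U" "\<phi> ` P = P"
    and r: "r \<in> U" "r' \<in> U" "P #> r = P #> r'"
  shows "P #> \<phi> r = P #> \<phi> r'"
proof -
  have U: "subgroup U G" by (rule mor_dom_subgroup[OF \<phi>])
  have "r \<otimes> inv r' \<in> P"
    using r rcos_eq_iff[OF P(1)] subgroup.mem_carrier[OF U] by blast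
  then have "\<phi> (r \<otimes> inv r') \<in> P" using P(3) by blast
  moreover have "\<phi> (r \<otimes> inv r') = \<phi> r \<otimes> inv (\<phi> r')"
    using mor_mult[OF \<phi> r(1) subgroup.m_inv_closed[OF U r(2)]] mor_inv[OF \<phi> r(2)] by simp
  ultimately show ?thesis using rcos_eq_iff[OF P(1) mor_carrier[OF \<phi> r(1)] mor_carrier[OF \<phi> r(2)]] by simp
qed

lemma induced_quotient_mor:
  assumes \<phi>: "\<phi> \<in> F U V" and P: "subgroup P G" "P \<subseteq> U" "\<phi> ` P = P"
  shows "\<exists>\<psi> \<in> fusion_quotient G F P ((\<lambda>r. P #> r) ` U) ((\<lambda>r. P #> r) ` V).
           \<forall>r\<in>U. \<psi> (P #> r) = P #> \<phi> r"
proof -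
  define \<psi> where "\<psi> = restrict (\<lambda>C. P #> \<phi> (inv_into U (\<lambda>r. P #> r) C)) ((\<lambda>r. P #> r) ` U)"
  have val: "\<psi> (P #> r) = P #> \<phi> r" if r: "r \<in> U" for r
  proof -
    have mem: "P #> r \<in> (\<lambda>r. P #> r) ` U" using r by blast
    define s where "s = inv_into U (\<lambda>r. P #> r) (P #> r)"
    have s: "s \<in> U" "P #> s = P #> r"
      unfolding s_def using inv_into_into[OF mem] f_inv_into_f[OF mem] by simp_all
    have "\<psi> (P #> r) = P #> \<phi> s" unfolding \<psi>_def s_def using mem by simp
    also have "\<dots> = P #> \<phi> r" by (rule mor_rcos_cong[OF \<phi> P s(1) r s(2)])
    finally show ?thesis .
  qed
  moreover have "P \<subseteq> V" using P(2,3) mor_image_subset[OF \<phi>] by blast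
  moreover have "\<psi> \<in> extensional ((\<lambda>r. P #> r) ` U)" unfolding \<psi>_def by simp
  ultimately have "\<psi> \<in> fusion_quotient G F P ((\<lambda>r. P #> r) ` U) ((\<lambda>r. P #> r) ` V)"
    unfolding fusion_quotient_def mem_Collect_eq using \<phi> P(2,3)
    by (intro exI[of _ U] exI[of _ V] exI[of _ \<phi>]) simp
  then show ?thesis using val by blast
qed

lemma fusion_quotient_lift:
  assumes "\<chi> \<in> fusion_quotient G F P A B"
  shows "\<exists>R1 R2 \<phi>. P \<subseteq> R1 \<and> \<phi> \<in> F R1 R2 \<and> A = (\<lambda>r. P #> r) ` R1 \<and>
           (\<forall>r\<in>R1. \<chi> (P #> r) = P #> \<phi> r)"
  using assms unfolding fusion_quotient_def mem_Collect_eq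
  by (elim exE conjE) (intro exI conjI, assumption+)

end

locale quotient_normal = saturated_fusion_sys +
  fixes P Q :: "'a set"
  assumes P_normal: "fusion_normal G F P"
    and Q_subgroup: "subgroup Q G" and P_subset_Q: "P \<subseteq> Q"
    and Q_quotient_normal: "fusion_normal (G Mod P) (fusion_quotient G F P) ((\<lambda>q. P #> q) ` Q)"
begin

lemma P_subgroup: "subgroup P G"
  using P_normal unfolding fusion_normal_def by blast

lemma P_normal_subgroup: "P \<lhd> G"
  by (rule fusion_normal_normal[OF P_normal])

lemma quotient_extension:
  "\<psi> \<in> fusion_quotient G F P U V \<Longrightarrow>
     has_normalizing_extension (fusion_quotient G F P) ((\<lambda>r. P #> r) ` Q) U \<psi>"
  by (rule conjunct2[OF Q_quotient_normal[unfolded fusion_normal_iff], rule_format])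

text \<open>A morphism normalizing P induces one of \<open>F/P\<close>; extend that using the normality of \<open>Q/P\<close>
  and lift it back to F.\<close>

lemma quotient_lift:
  assumes \<phi>: "\<phi> \<in> F U V" and PU: "P \<subseteq> U" and \<phi>P: "\<phi> ` P = P"
  shows "\<exists>R1 R2 \<phi>'. U \<subseteq> R1 \<and> Q \<subseteq> R1 \<and> \<phi>' \<in> F R1 R2 \<and>
           (\<forall>r\<in>U. P #> \<phi>' r = P #> \<phi> r) \<and> (\<forall>q\<in>Q. \<phi>' q \<in> Q)"
proof -
  obtain \<psi> where \<psi>: "\<psi> \<in> fusion_quotient G F P ((\<lambda>r. P #> r) ` U) ((\<lambda>r. P #> r) ` V)"
    "\<forall>r\<in>U. \<psi> (P #> r) = P #> \<phi> r"
    using induced_quotient_mor[OF \<phi> P_subgroup PU \<phi>P] by blast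
  obtain A B \<chi> where \<chi>: "(\<lambda>r. P #> r) ` U \<subseteq> A" "(\<lambda>r. P #> r) ` Q \<subseteq> A"
    "\<chi> \<in> fusion_quotient G F P A B" "\<forall>y\<in>(\<lambda>r. P #> r) ` U. \<chi> y = \<psi> y"
    "\<chi> ` (\<lambda>r. P #> r) ` Q = (\<lambda>r. P #> r) ` Q"
    using quotient_extension[OF \<psi>(1)] unfolding has_normalizing_extension_def
    by (elim exE conjE) (rule that; assumption)
  obtain R1 R2 \<phi>' where R1: "P \<subseteq> R1" "\<phi>' \<in> F R1 R2" "A = (\<lambda>r. P #> r) ` R1"
    and \<chi>\<phi>': "\<forall>r\<in>R1. \<chi> (P #> r) = P #> \<phi>' r"
    using fusion_quotient_lift[OF \<chi>(3)] by (elim exE conjE) (rule that; assumption)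
  have R1G: "subgroup R1 G" by (rule mor_dom_subgroup[OF R1(2)])
  have UR1: "U \<subseteq> R1"
    by (rule subset_of_rcos_image_subset[OF R1G R1(1) P_subgroup subgroup.subset[OF mor_dom_subgroup[OF \<phi>]]
          \<chi>(1)[unfolded R1(3)]])
  have QR1: "Q \<subseteq> R1"
    by (rule subset_of_rcos_image_subset[OF R1G R1(1) P_subgroup subgroup.subset[OF Q_subgroup]
          \<chi>(2)[unfolded R1(3)]])
  have "P #> \<phi>' r = P #> \<phi> r" if r: "r \<in> U" for r
  proof -
    have "P #> \<phi>' r = \<chi> (P #> r)" using \<chi>\<phi>' UR1 r by auto
    also have "\<dots> = \<psi> (P #> r)" using \<chi>(4) r by blast
    also have "\<dots> = P #> \<phi> r" using \<psi>(2) r by blast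
    finally show ?thesis .
  qed
  moreover have "\<phi>' q \<in> Q" if q: "q \<in> Q" for q
  proof -
    have "\<chi> (P #> q) \<in> \<chi> ` (\<lambda>r. P #> r) ` Q" using q by blast
    then have "P #> \<phi>' q \<in> (\<lambda>r. P #> r) ` Q" using \<chi>\<phi>' \<chi>(5) q QR1 by auto
    then show ?thesis
      by (rule mem_of_rcos_mem_image[OF Q_subgroup P_subset_Q P_subgroup mor_carrier[OF R1(2) subsetD[OF QR1 q]]])
  qed
  ultimately show ?thesis using UR1 QR1 R1(2) by blast
qed

lemma Q_strongly_closed: "strongly_closed F Q"
  unfolding strongly_closed_def
proof (intro allI impI)
  fix U V \<phi> x assume \<phi>: "\<phi> \<in> F U V" and x: "x \<in> U" and xQ: "x \<in> Q"
  obtain A B \<phi>1 where \<phi>1: "U \<subseteq> A" "P \<subseteq> A" "\<phi>1 \<in> F A B" "\<forall>x\<in>U. \<phi>1 x = \<phi> x" "\<phi>1 ` P = P"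
    using P_normal \<phi> unfolding fusion_normal_iff has_normalizing_extension_def by blast
  obtain R1 R2 \<phi>' where \<phi>': "Q \<subseteq> R1" "\<phi>' \<in> F R1 R2" "P #> \<phi>' x = P #> \<phi>1 x" "\<phi>' x \<in> Q"
    using quotient_lift[OF \<phi>1(3,2,5)] \<phi>1(1) x xQ by blast
  have xR1: "x \<in> R1" using \<phi>'(1) xQ by blast
  have "P #> \<phi> x = P #> \<phi>' x" using \<phi>'(3) \<phi>1(4) x by simp
  then have "\<phi> x \<otimes> inv (\<phi>' x) \<in> P"
    using rcos_eq_iff[OF P_subgroup mor_carrier[OF \<phi> x] mor_carrier[OF \<phi>'(2) xR1]] by simp
  then have "\<phi> x \<otimes> inv (\<phi>' x) \<otimes> \<phi>' x \<in> Q"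
    using subgroup.m_closed[OF Q_subgroup _ \<phi>'(4)] P_subset_Q by blast
  then show "\<phi> x \<in> Q"
    using mor_carrier[OF \<phi> x] mor_carrier[OF \<phi>'(2) xR1] by (simp add: m_assoc)
qed

lemma Q_normal_subgroup: "Q \<lhd> G"
  by (rule strongly_closed_normal[OF Q_strongly_closed Q_subgroup])

lemma strongly_closed_Int_invariant:
  assumes "\<eta> \<in> F R R" shows "\<eta> ` (R \<inter> Q) \<subseteq> R \<inter> Q"
  using mor_closed[OF assms] Q_strongly_closed assms unfolding strongly_closed_def by blast

lemma strongly_closed_Int_image_eq: "\<eta> \<in> F R R \<Longrightarrow> \<eta> ` (R \<inter> Q) = R \<inter> Q"
  by (rule mor_image_eq[OF _ Int_lower1 strongly_closed_Int_invariant])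

text \<open>For abelian Q, \<open>\<gamma> c\<^sub>g \<gamma>\<inverse>\<close> centralizes \<open>R \<inter> Q\<close> and acts trivially modulo \<open>R \<inter> Q\<close>, as
  \<open>x\<inverse> c\<^sub>g(x) = [x\<inverse>, g] \<in> Q\<close>.\<close>

lemma conj_transport_series_stabilizer_abelian:
  assumes ab: "\<forall>x\<in>Q. \<forall>y\<in>Q. x \<otimes> y = y \<otimes> x"
    and R: "subgroup R G" and \<gamma>: "\<gamma> \<in> F R R" and g: "g \<in> Q" "g \<in> normalizerS G R"
  shows "conj_transport R \<gamma> g \<in> series_stabilizer R (R \<inter> Q)"
proof -
  have \<gamma>R: "\<gamma> ` R = R" by (rule aut_image_eq[OF \<gamma>])
  have gc: "g \<in> carrier G" using g(2) normalizerS_subset_carrier by blast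
  have Rc: "\<And>x. x \<in> R \<Longrightarrow> x \<in> carrier G" using subgroup.mem_carrier[OF R] by blast
  have \<theta>F: "conj_transport R \<gamma> g \<in> F R R" using conj_transport_mor[OF \<gamma> g(2)] \<gamma>R by simp
  have "conj_transport R \<gamma> g z = z" if z: "z \<in> R \<inter> Q" for z
  proof -
    have "z \<in> \<gamma> ` (R \<inter> Q)" using z strongly_closed_Int_image_eq[OF \<gamma>] by simp
    then obtain x where x: "x \<in> R \<inter> Q" "z = \<gamma> x" by blast
    have "g \<otimes> x = x \<otimes> g" using ab g(1) x(1) by blast
    then have "conjmap G g x = x" using gc Rc x(1) unfolding conjmap_def by (auto simp: m_assoc)
    then show ?thesis using conj_transport_apply[OF \<gamma>] x by auto
  qed
  moreover have "inv y \<otimes> conj_transport R \<gamma> g y \<in> R \<inter> Q" if y: "y \<in> R" for y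
  proof -
    obtain x where x: "x \<in> R" "y = \<gamma> x" using y \<gamma>R by blast
    have gx: "conjmap G g x \<in> R" using normalizerS_conj_image[OF g(2)] x(1) by blast
    have "inv x \<otimes> conjmap G g x \<in> R \<inter> Q"
      using subgroup.m_closed[OF R subgroup.m_inv_closed[OF R x(1)] gx]
        inv_mult_conjmap_mem[OF Q_normal_subgroup g(1) Rc[OF x(1)]] by (rule IntI)
    then have "\<gamma> (inv x \<otimes> conjmap G g x) \<in> R \<inter> Q"
      by (rule subsetD[OF strongly_closed_Int_invariant[OF \<gamma>] imageI])
    then show ?thesis
      using mor_mult[OF \<gamma> subgroup.m_inv_closed[OF R x(1)] gx] mor_inv[OF \<gamma> x(1)]
        conj_transport_apply[OF \<gamma> x(1)] x(2) by simp
  qed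
  ultimately show ?thesis unfolding series_stabilizer_def using \<theta>F by blast
qed

lemma N_phi_of_abelian:
  assumes ab: "\<forall>x\<in>Q. \<forall>y\<in>Q. x \<otimes> y = y \<otimes> x"
    and R: "subgroup R G" "fully_normalized G F R" and \<gamma>: "\<gamma> \<in> F R R"
    and g: "g \<in> Q" "g \<in> normalizerS G R"
  shows "g \<in> N_phi G R \<gamma>"
proof -
  have "subgroup (R \<inter> Q) G" by (rule subgroups_Inter_pair[OF R(1) Q_subgroup])
  then have "conj_transport R \<gamma> g \<in> HomS G R R"
    by (rule subsetD[OF series_stabilizer_subset_HomS[OF R _ Int_lower1 strongly_closed_Int_invariant]
          conj_transport_series_stabilizer_abelian[OF ab R(1) \<gamma> g]])
  then show ?thesis using mem_N_phi_of_conj_transport[OF \<gamma> g(2)] aut_image_eq[OF \<gamma>] by simp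
qed

text \<open>Lifting \<open>\<gamma>\<close> to a morphism \<open>\<phi>'\<close> defined on Q shows that \<open>\<gamma> c\<^sub>g \<gamma>\<inverse>\<close> agrees with
  \<open>c\<^sub>h\<close>, \<open>h = \<phi>'(g)\<close>, modulo P.\<close>

lemma conj_transport_mod_P:
  assumes R: "subgroup R G" "P \<subseteq> R" and \<gamma>: "\<gamma> \<in> F R R"
    and g: "g \<in> Q" "g \<in> normalizerS G R"
  shows "\<exists>h\<in>normalizerS G R. \<forall>x\<in>R. P #> \<gamma> (conjmap G g x) = P #> conjmap G h (\<gamma> x)"
proof -
  obtain R1 R2 \<phi>' where \<phi>': "R \<subseteq> R1" "Q \<subseteq> R1" "\<phi>' \<in> F R1 R2"
    "\<And>r. r \<in> R \<Longrightarrow> P #> \<phi>' r = P #> \<gamma> r"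
    using quotient_lift[OF \<gamma> R(2) fusion_normal_image_eq[OF P_normal \<gamma> R(2)]] by blast
  have R1: "subgroup R1 G" by (rule mor_dom_subgroup[OF \<phi>'(3)])
  have gR1: "g \<in> R1" using g(1) \<phi>'(2) by blast
  define h where "h = \<phi>' g"
  have hc: "h \<in> carrier G" unfolding h_def by (rule mor_carrier[OF \<phi>'(3) gR1])
  have key: "P #> \<gamma> (conjmap G g x) = P #> conjmap G h (\<gamma> x)" if x: "x \<in> R" for x
  proof -
    have xR1: "x \<in> R1" using x \<phi>'(1) by blast
    have gx: "conjmap G g x \<in> R" using normalizerS_conj_image[OF g(2)] x by blast
    have "\<phi>' (conjmap G g x) = conjmap G h (\<phi>' x)"
      unfolding conjmap_def h_def
      using mor_mult[OF \<phi>'(3)] mor_inv[OF \<phi>'(3) gR1] subgroup.m_closed[OF R1 gR1 xR1]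
        subgroup.m_inv_closed[OF R1 gR1] gR1 xR1 by simp
    then have "P #> \<gamma> (conjmap G g x) = P #> conjmap G h (\<phi>' x)" using \<phi>'(4)[OF gx] by simp
    also have "\<dots> = P #> conjmap G h (\<gamma> x)"
      by (rule rcos_conjmap_cong[OF P_normal_subgroup hc mor_carrier[OF \<phi>'(3) xR1]
            mor_carrier[OF \<gamma> x] \<phi>'(4)[OF x]])
    finally show ?thesis .
  qed
  then show ?thesis using normalizes_of_conj_mod[OF P_subgroup R(2) \<gamma> g(2) hc] by blast
qed

text \<open>For central P, \<open>c\<^sub>h\<inverse> \<gamma> c\<^sub>g \<gamma>\<inverse>\<close> fixes P pointwise and acts trivially on R/P.\<close>

lemma conj_twist_series_stabilizer_central:
  assumes PZ: "P \<subseteq> fusion_center G F" and R: "subgroup R G" "P \<subseteq> R" and \<gamma>: "\<gamma> \<in> F R R"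
    and g: "g \<in> normalizerS G R" and h: "h \<in> normalizerS G R"
    and key: "\<forall>x\<in>R. P #> \<gamma> (conjmap G g x) = P #> conjmap G h (\<gamma> x)"
  shows "restrict (restrict (conjmap G (inv h)) R \<circ> conj_transport R \<gamma> g) R \<in> series_stabilizer R P"
proof -
  define \<theta> where "\<theta> = conj_transport R \<gamma> g"
  define \<delta> where "\<delta> = restrict (restrict (conjmap G (inv h)) R \<circ> \<theta>) R"
  have N: "subgroup (normalizerS G R) G" by (rule subgroup_normalizerS[OF subgroup.subset[OF R(1)]])
  have hc: "h \<in> carrier G" and ihN: "inv h \<in> normalizerS G R"
    using h normalizerS_subset_carrier subgroup.m_inv_closed[OF N h] by auto
  have Rc: "\<And>x. x \<in> R \<Longrightarrow> x \<in> carrier G" using subgroup.mem_carrier[OF R(1)] by blast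
  have \<theta>F: "\<theta> \<in> F R R" unfolding \<theta>_def using conj_transport_mor[OF \<gamma> g] aut_image_eq[OF \<gamma>] by simp
  have \<delta>F: "\<delta> \<in> F R R"
    unfolding \<delta>_def using mor_comp[OF \<theta>F conj_mor[OF R(1) R(1) inv_closed[OF hc]]]
      normalizerS_conj_image[OF ihN] by simp
  have "inv y \<otimes> \<delta> y \<in> P" if y: "y \<in> R" for y
  proof -
    obtain x where x: "x \<in> R" "y = \<gamma> x" using y aut_image_eq[OF \<gamma>] by blast
    have "P #> \<theta> y = P #> conjmap G h y"
      unfolding \<theta>_def x(2) conj_transport_apply[OF \<gamma> x(1)] using key x(1) by blast
    then have "P #> \<delta> y = P #> y"
      using rcos_conjmap_cong[OF P_normal_subgroup inv_closed[OF hc] mor_carrier[OF \<theta>F y]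
          conjmap_closed[OF hc Rc[OF y]]] y mor_closed[OF \<theta>F y] hc Rc[OF y] unfolding \<delta>_def by simp
    then have "\<delta> y \<otimes> inv y \<in> P" using rcos_eq_iff[OF P_subgroup mor_carrier[OF \<delta>F y] Rc[OF y]] by simp
    then have "inv y \<otimes> (\<delta> y \<otimes> inv y) \<otimes> inv (inv y) \<in> P"
      by (rule normal_invE(2)[OF P_normal_subgroup inv_closed[OF Rc[OF y]]])
    then show ?thesis using Rc[OF y] mor_carrier[OF \<delta>F y] by (simp add: m_assoc)
  qed
  moreover have "\<delta> z = z" if "z \<in> P" for z using fusion_center_fixes[OF PZ \<delta>F that] that R(2) by blast
  ultimately show ?thesis unfolding series_stabilizer_def \<delta>_def[symmetric] \<theta>_def[symmetric] using \<delta>F by blast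
qed

lemma N_phi_of_central:
  assumes PZ: "P \<subseteq> fusion_center G F"
    and R: "subgroup R G" "fully_normalized G F R" "P \<subseteq> R" and \<gamma>: "\<gamma> \<in> F R R"
    and g: "g \<in> Q" "g \<in> normalizerS G R"
  shows "g \<in> N_phi G R \<gamma>"
proof -
  obtain h where h: "h \<in> normalizerS G R"
    and key: "\<forall>x\<in>R. P #> \<gamma> (conjmap G g x) = P #> conjmap G h (\<gamma> x)"
    using conj_transport_mod_P[OF R(1,3) \<gamma> g] by blast
  have P_invariant: "\<eta> ` P \<subseteq> P" if "\<eta> \<in> F R R" for \<eta>
    using fusion_normal_image_eq[OF P_normal that R(3)] by simp
  have "restrict (restrict (conjmap G (inv h)) R \<circ> conj_transport R \<gamma> g) R \<in> HomS G R R"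
    by (rule subsetD[OF series_stabilizer_subset_HomS[OF R(1,2) P_subgroup R(3) P_invariant]
          conj_twist_series_stabilizer_central[OF PZ R(1,3) \<gamma> g(2) h key]])
  then have "conj_transport R \<gamma> g \<in> HomS G R R"
    using HomS_of_conj_comp[OF _ h] conj_transport_mor[OF \<gamma> g(2)] aut_image_eq[OF \<gamma>] by simp
  then show ?thesis using mem_N_phi_of_conj_transport[OF \<gamma> g(2)] aut_image_eq[OF \<gamma>] by simp
qed

end

theorem lemma1p19:
  fixes G :: "('a, 'b) monoid_scheme" and F :: "'a set \<Rightarrow> 'a set \<Rightarrow> ('a \<Rightarrow> 'a) set"
    and p :: nat and P Q :: "'a set"
  assumes "group G" and "finite (carrier G)" and "Factorial_Ring.prime p" and "\<exists>n. order G = p ^ n"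
    and "saturated_fusion_system p G F"
    and "subgroup P G" and "subgroup Q G" and "P \<subseteq> Q"
    and "fusion_normal G F P"
    and "fusion_normal (G Mod P) (fusion_quotient G F P) ((\<lambda>q. P #>\<^bsub>G\<^esub> q) ` Q)"
    and "(\<forall>x\<in>Q. \<forall>y\<in>Q. x \<otimes>\<^bsub>G\<^esub> y = y \<otimes>\<^bsub>G\<^esub> x) \<or> P \<subseteq> fusion_center G F"
  shows "fusion_normal G F Q"
proof -
  have qn: "quotient_normal G p F P Q"
    unfolding quotient_normal_def quotient_normal_axioms_def saturated_fusion_sys_def
      saturated_fusion_sys_axioms_def p_group_def p_group_axioms_def
    using assms(1,3-5,7-10) by blast
  then interpret quotient_normal G p F P Q .
  have Q_N_phi: "Q \<inter> normalizerS G R \<subseteq> N_phi G R \<gamma>"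
    if "subgroup R G" "fully_normalized G F R" "P \<subseteq> R" "\<gamma> \<in> F R R" for R \<gamma>
    using assms(11) N_phi_of_abelian[OF _ that(1,2,4)] N_phi_of_central[OF _ that] by blast
  have "normal_criterion G p F P Q"
    by (intro normal_criterion.intro quotient_normal.axioms(1)[OF qn] normal_criterion_axioms.intro
        P_normal Q_subgroup Q_strongly_closed Q_N_phi)
  then interpret normal_criterion G p F P Q .
  show ?thesis by (rule fusion_normal)
qed

end
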